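(* In the sequent calculus $\mathsf{S.ConstCKCEM}$, the rules $\mathsf{w_L}$ (from $\Gamma\Rightarrow\Delta$ infer $\Gamma,\varphi\Rightarrow\Delta$), $\mathsf{w_R}$ (from $\Gamma\Rightarrow$ infer $\Gamma\Rightarrow\varphi$) and $\mathsf{c}$ (from $\Gamma,\varphi,\varphi\Rightarrow\Delta$ infer $\Gamma,\varphi\Rightarrow\Delta$) are height-preserving admissible, and $\mathsf{cut}$ (from $\Gamma\Rightarrow\varphi$ and $\Gamma',\varphi\Rightarrow\Delta$ infer $\Gamma,\Gamma'\Rightarrow\Delta$) is admissible. Moreover, a sequent $\Gamma\Rightarrow\Delta$ is derivable in $\mathsf{S.ConstCKCEM}$ if and only if $\iota(\Gamma\Rightarrow\Delta)$ is derivable in $\mathsf{ConstCKCEM}$.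
   Context: Language $\mathcal{L}$: formulas $\varphi ::= p \mid \bot \mid \varphi\wedge\varphi \mid \varphi\vee\varphi \mid \varphi\to\varphi \mid \varphi \mathrel{\Box\!\!\to} \varphi \mid \varphi \mathrel{\Diamond\!\!\to}\varphi$; $\neg\varphi:=\varphi\to\bot$, $\top:=\neg\bot$, $\varphi\leftrightarrow\psi:=(\varphi\to\psi)\wedge(\psi\to\varphi)$. $\mathsf{ConstCK}$: any axiomatisation of intuitionistic propositional logic in $\mathcal{L}$ with modus ponens, plus CM$_\Box$: $(\varphi\mathrel{\Box\!\!\to}\psi\wedge\chi)\to(\varphi\mathrel{\Box\!\!\to}\psi)\wedge(\varphi\mathrel{\Box\!\!\to}\chi)$; CC$_\Box$: $(\varphi\mathrel{\Box\!\!\to}\psi)\wedge(\varphi\mathrel{\Box\!\!\to}\chi)\to(\varphi\mathrel{\Box\!\!\to}\psi\wedge\chi)$; CN$_\Box$: $\varphi\mathrel{\Box\!\!\to}\top$; CN$_\Diamond$: $\neg(\varphi\mathrel{\Diamond\!\!\to}\bot)$; CK$_\Diamond$: $(\varphi\mathrel{\Box\!\!\to}(\psi\to\chi))\to((\varphi\mathrel{\Diamond\!\!\to}\psi)\to(\varphi\mathrel{\Diamond\!\!\to}\chi))$; rules RA$_\Box$: from $\varphi\leftrightarrow\rho$ infer $(\varphi\mathrel{\Box\!\!\to}\psi)\leftrightarrow(\rho\mathrel{\Box\!\!\to}\psi)$; RC$_\Box$: from $\psi\leftrightarrow\chi$ infer $(\varphi\mathrel{\Box\!\!\to}\psi)\leftrightarrow(\varphi\mathrel{\Box\!\!\to}\chi)$;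 RA$_\Diamond$, RC$_\Diamond$: same with $\mathrel{\Diamond\!\!\to}$. $\mathsf{ConstCKCEM}$ = $\mathsf{ConstCK}$ + CEM$_\Diamond$: $(\varphi\mathrel{\Diamond\!\!\to}\psi)\wedge(\varphi\mathrel{\Diamond\!\!\to}\chi)\to(\varphi\mathrel{\Diamond\!\!\to}\psi\wedge\chi)$. A sequent $\Gamma\Rightarrow\Delta$ is a pair of finite multisets with $|\Delta|\le1$; $\varphi\Leftrightarrow\rho$ abbreviates $\varphi\Rightarrow\rho$ and $\rho\Rightarrow\varphi$. $\iota(\Gamma\Rightarrow\Delta)=\bigwedge\Gamma\to\bigvee\Delta$ if $\Gamma\neq\emptyset$, $\bigvee\Delta$ otherwise, $\bigvee\emptyset=\bot$. Rules of $\mathsf{S.ConstCKCEM}$ (premisses / conclusion, $0\le|\Delta|\le1$, $n,k\ge0$): init: $\Gamma,p\Rightarrow p$; $\bot_L$: $\Gamma,\bot\Rightarrow\Delta$; $\wedge_L$: $\Gamma,\varphi,\psi\Rightarrow\Delta$ / $\Gamma,\varphi\wedge\psi\Rightarrow\Delta$; $\wedge_R$: $\Gamma\Rightarrow\varphi$, $\Gamma\Rightarrow\psi$ / $\Gamma\Rightarrow\varphi\wedge\psi$; $\vee_L$: $\Gamma,\varphi\Rightarrow\Delta$, $\Gamma,\psi\Rightarrow\Delta$ / $\Gamma,\varphi\vee\psi\Rightarrow\Delta$; $\vee_R^1$: $\Gamma\Rightarrow\varphi$ / $\Gamma\Rightarrow\varphi\vee\psi$; $\vee_R^2$: $\Gamma\Rightarrow\psi$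 / $\Gamma\Rightarrow\varphi\vee\psi$; $\to_R$: $\Gamma,\varphi\Rightarrow\psi$ / $\Gamma\Rightarrow\varphi\to\psi$; $\to_L$: $\Gamma,\varphi\to\psi\Rightarrow\varphi$, $\Gamma,\psi\Rightarrow\Delta$ / $\Gamma,\varphi\to\psi\Rightarrow\Delta$; $\Box$: $\{\varphi\Leftrightarrow\rho_i\}_{i\le n}$, $\sigma_1,\dots,\sigma_n\Rightarrow\psi$ / $\Gamma,\rho_1\mathrel{\Box\!\!\to}\sigma_1,\dots,\rho_n\mathrel{\Box\!\!\to}\sigma_n\Rightarrow\varphi\mathrel{\Box\!\!\to}\psi$; $\Diamond^{cem}$: $\{\varphi\Leftrightarrow\rho_i\}_{i\le n}$, $\{\varphi\Leftrightarrow\xi_j\}_{j\le k}$, $\varphi\Leftrightarrow\eta$, $\sigma_1,\dots,\sigma_n,\chi_1,\dots,\chi_k,\psi\Rightarrow\vartheta$ / $\Gamma,\rho_1\mathrel{\Box\!\!\to}\sigma_1,\dots,\rho_n\mathrel{\Box\!\!\to}\sigma_n,\xi_1\mathrel{\Diamond\!\!\to}\chi_1,\dots,\xi_k\mathrel{\Diamond\!\!\to}\chi_k,\varphi\mathrel{\Diamond\!\!\to}\psi\Rightarrow\eta\mathrel{\Diamond\!\!\to}\vartheta$; $\Box\Diamond^{cem}$: $\{\varphi\Leftrightarrow\rho_i\}_{i\le n}$, $\{\varphi\Leftrightarrow\xi_j\}_{j\le k}$, $\sigma_1,\dots,\sigma_n,\chi_1,\dots,\chi_k,\psi\Rightarrow$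 / $\Gamma,\rho_1\mathrel{\Box\!\!\to}\sigma_1,\dots,\rho_n\mathrel{\Box\!\!\to}\sigma_n,\xi_1\mathrel{\Diamond\!\!\to}\chi_1,\dots,\xi_k\mathrel{\Diamond\!\!\to}\chi_k,\varphi\mathrel{\Diamond\!\!\to}\psi\Rightarrow\Delta$. Height of a derivation: length of its longest branch minus 1. A rule is admissible if its conclusion is derivable whenever its premisses are; height-preserving admissible if moreover the conclusion has a derivation of height at most the maximal height of the premisses' derivations. *)

theory Defs
  imports Main "HOL-Library.Multiset"
begin

datatype 'a fm =
    Atom 'a
  | Bot
  | And "'a fm" "'a fm"
  | Or "'a fm" "'a fm"
  | Imp "'a fm" "'a fm"
  | CBox "'a fm" "'a fm"
  | CDia "'a fm" "'a fm"

definition Neg :: "'a fm \<Rightarrow> 'a fm" where "Neg \<phi> = Imp \<phi> Bot"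
definition Top :: "'a fm" where "Top = Neg Bot"
definition Iff :: "'a fm \<Rightarrow> 'a fm \<Rightarrow> 'a fm" where
  "Iff \<phi> \<psi> = And (Imp \<phi> \<psi>) (Imp \<psi> \<phi>)"

inductive ConstCKCEM :: "'a fm \<Rightarrow> bool" where
  A1: "ConstCKCEM (Imp \<phi> (Imp \<psi> \<phi>))"
| A2: "ConstCKCEM (Imp (Imp \<phi> (Imp \<psi> \<chi>)) (Imp (Imp \<phi> \<psi>) (Imp \<phi> \<chi>)))"
| A3: "ConstCKCEM (Imp (And \<phi> \<psi>) \<phi>)"
| A4: "ConstCKCEM (Imp (And \<phi> \<psi>) \<psi>)"
| A5: "ConstCKCEM (Imp \<phi> (Imp \<psi> (And \<phi> \<psi>)))"
| A6: "ConstCKCEM (Imp \<phi> (Or \<phi> \<psi>))"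
| A7: "ConstCKCEM (Imp \<psi> (Or \<phi> \<psi>))"
| A8: "ConstCKCEM (Imp (Imp \<phi> \<chi>) (Imp (Imp \<psi> \<chi>) (Imp (Or \<phi> \<psi>) \<chi>)))"
| A9: "ConstCKCEM (Imp Bot \<phi>)"
| MP: "ConstCKCEM (Imp \<phi> \<psi>) \<Longrightarrow> ConstCKCEM \<phi> \<Longrightarrow> ConstCKCEM \<psi>"
| CM_Box: "ConstCKCEM (Imp (CBox \<phi> (And \<psi> \<chi>)) (And (CBox \<phi> \<psi>) (CBox \<phi> \<chi>)))"
| CC_Box: "ConstCKCEM (Imp (And (CBox \<phi> \<psi>) (CBox \<phi> \<chi>)) (CBox \<phi> (And \<psi> \<chi>)))"
| CN_Box: "ConstCKCEM (CBox \<phi> Top)"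
| CN_Dia: "ConstCKCEM (Neg (CDia \<phi> Bot))"
| CK_Dia: "ConstCKCEM (Imp (CBox \<phi> (Imp \<psi> \<chi>)) (Imp (CDia \<phi> \<psi>) (CDia \<phi> \<chi>)))"
| CEM_Dia: "ConstCKCEM (Imp (And (CDia \<phi> \<psi>) (CDia \<phi> \<chi>)) (CDia \<phi> (And \<psi> \<chi>)))"
| RA_Box: "ConstCKCEM (Iff \<phi> \<rho>) \<Longrightarrow> ConstCKCEM (Iff (CBox \<phi> \<psi>) (CBox \<rho> \<psi>))"
| RC_Box: "ConstCKCEM (Iff \<psi> \<chi>) \<Longrightarrow> ConstCKCEM (Iff (CBox \<phi> \<psi>) (CBox \<phi> \<chi>))"
| RA_Dia: "ConstCKCEM (Iff \<phi> \<rho>) \<Longrightarrow> ConstCKCEM (Iff (CDia \<phi> \<psi>) (CDia \<rho> \<psi>))"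
| RC_Dia: "ConstCKCEM (Iff \<psi> \<chi>) \<Longrightarrow> ConstCKCEM (Iff (CDia \<phi> \<psi>) (CDia \<phi> \<chi>))"

text \<open>A sequent is a pair (\<Gamma>, \<Delta>) with \<Gamma> a finite multiset and \<Delta> a multiset of size
  at most one, represented as an option (None = empty succedent).
  SD n G D means: \<Gamma> \<Rightarrow> \<Delta> has a derivation of height at most n.
  In the modal rules, the lists bs and ds enumerate the pairs (\<rho>_i,\<sigma>_i) and (\<xi>_j,\<chi>_j).\<close>

inductive SD :: "nat \<Rightarrow> 'a fm multiset \<Rightarrow> 'a fm option \<Rightarrow> bool" where
  init: "SD n (add_mset (Atom p) \<Gamma>) (Some (Atom p))"
| botL: "SD n (add_mset Bot \<Gamma>) \<Delta>"
| andL: "SD n (add_mset \<phi> (add_mset \<psi> \<Gamma>)) \<Delta> \<Longrightarrow> SD (Suc n) (add_mset (And \<phi> \<psi>) \<Gamma>) \<Delta>"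
| andR: "SD n \<Gamma> (Some \<phi>) \<Longrightarrow> SD n \<Gamma> (Some \<psi>) \<Longrightarrow> SD (Suc n) \<Gamma> (Some (And \<phi> \<psi>))"
| orL: "SD n (add_mset \<phi> \<Gamma>) \<Delta> \<Longrightarrow> SD n (add_mset \<psi> \<Gamma>) \<Delta> \<Longrightarrow>
        SD (Suc n) (add_mset (Or \<phi> \<psi>) \<Gamma>) \<Delta>"
| orR1: "SD n \<Gamma> (Some \<phi>) \<Longrightarrow> SD (Suc n) \<Gamma> (Some (Or \<phi> \<psi>))"
| orR2: "SD n \<Gamma> (Some \<psi>) \<Longrightarrow> SD (Suc n) \<Gamma> (Some (Or \<phi> \<psi>))"
| impR: "SD n (add_mset \<phi> \<Gamma>) (Some \<psi>) \<Longrightarrow> SD (Suc n) \<Gamma> (Some (Imp \<phi> \<psi>))"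
| impL: "SD n (add_mset (Imp \<phi> \<psi>) \<Gamma>) (Some \<phi>) \<Longrightarrow> SD n (add_mset \<psi> \<Gamma>) \<Delta> \<Longrightarrow>
         SD (Suc n) (add_mset (Imp \<phi> \<psi>) \<Gamma>) \<Delta>"
| box: "(\<forall>(\<rho>, \<sigma>) \<in> set bs. SD n {#\<phi>#} (Some \<rho>) \<and> SD n {#\<rho>#} (Some \<phi>)) \<Longrightarrow>
        SD n (mset (map snd bs)) (Some \<psi>) \<Longrightarrow>
        SD (Suc n) (\<Gamma> + mset (map (\<lambda>(\<rho>, \<sigma>). CBox \<rho> \<sigma>) bs)) (Some (CBox \<phi> \<psi>))"
| dia_cem: "(\<forall>(\<rho>, \<sigma>) \<in> set bs. SD n {#\<phi>#} (Some \<rho>) \<and> SD n {#\<rho>#} (Some \<phi>)) \<Longrightarrow>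
        (\<forall>(\<xi>, \<chi>) \<in> set ds. SD n {#\<phi>#} (Some \<xi>) \<and> SD n {#\<xi>#} (Some \<phi>)) \<Longrightarrow>
        SD n {#\<phi>#} (Some \<eta>) \<Longrightarrow> SD n {#\<eta>#} (Some \<phi>) \<Longrightarrow>
        SD n (add_mset \<psi> (mset (map snd bs) + mset (map snd ds))) (Some \<theta>) \<Longrightarrow>
        SD (Suc n) (add_mset (CDia \<phi> \<psi>) (\<Gamma> + mset (map (\<lambda>(\<rho>, \<sigma>). CBox \<rho> \<sigma>) bs)
                      + mset (map (\<lambda>(\<xi>, \<chi>). CDia \<xi> \<chi>) ds)))
                   (Some (CDia \<eta> \<theta>))"
| boxdia_cem: "(\<forall>(\<rho>, \<sigma>) \<in> set bs. SD n {#\<phi>#} (Some \<rho>) \<and> SD n {#\<rho>#} (Some \<phi>)) \<Longrightarrow>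
        (\<forall>(\<xi>, \<chi>) \<in> set ds. SD n {#\<phi>#} (Some \<xi>) \<and> SD n {#\<xi>#} (Some \<phi>)) \<Longrightarrow>
        SD n (add_mset \<psi> (mset (map snd bs) + mset (map snd ds))) None \<Longrightarrow>
        SD (Suc n) (add_mset (CDia \<phi> \<psi>) (\<Gamma> + mset (map (\<lambda>(\<rho>, \<sigma>). CBox \<rho> \<sigma>) bs)
                      + mset (map (\<lambda>(\<xi>, \<chi>). CDia \<xi> \<chi>) ds)))
                   \<Delta>"

definition SDerivable :: "'a fm multiset \<Rightarrow> 'a fm option \<Rightarrow> bool" where
  "SDerivable \<Gamma> \<Delta> \<longleftrightarrow> (\<exists>n. SD n \<Gamma> \<Delta>)"

fun big_and :: "'a fm list \<Rightarrow> 'a fm" where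
  "big_and [] = Top"
| "big_and [\<phi>] = \<phi>"
| "big_and (\<phi> # \<psi> # \<phi>s) = And \<phi> (big_and (\<psi> # \<phi>s))"

fun big_or :: "'a fm option \<Rightarrow> 'a fm" where
  "big_or None = Bot"
| "big_or (Some \<psi>) = \<psi>"

text \<open>iota applied to a list enumeration of the antecedent multiset.\<close>
definition iota :: "'a fm list \<Rightarrow> 'a fm option \<Rightarrow> 'a fm" where
  "iota \<Gamma>s \<Delta> = (if \<Gamma>s = [] then big_or \<Delta> else Imp (big_and \<Gamma>s) (big_or \<Delta>))"

end

(*
  Whether a sequent has a derivation of height n depends only on the set of formulas in its
  antecedent: if every formula of Gamma occurs in Gamma', a derivation of Gamma => Delta of height
  n yields one of Gamma' => Delta of height n, which is height-preserving weakening and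
  contraction at once.  This is proved by induction on n; a duplicated principal formula of a
  left rule is removed with the height-preserving invertibility of the conjunction and
  disjunction rules and of the right premise of the implication rule, and duplicated principal
  formulas of a modal rule are simply dropped from the instance.

  Cut is eliminated by induction on a bound M on the sizes of all formulas of both premises,
  then on the size of the cut formula, then on the sum of the heights.  The bound is needed
  when a principal diamond is cut against a side diamond of a diamond rule: the equivalences of
  the merged instance are composed through the antecedent of the other principal diamond, which
  is not a subformula of the cut formula, but is smaller than a formula of the conclusion.

  For the formula interpretation, soundness is by induction on derivations, a diamond rule
  being justified by merging its side diamonds with CEM and then applying its boxes with CK;
  completeness derives every axiom and rule of ConstCKCEM, using cut for modus ponens and for
  the congruence rules.
*)

theory Submission
  imports Defs
begin

(* Stated with image_mset, the simp normal form of the mset (map ...) used in the rules of SD. *)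
abbreviation cboxes :: "('a fm \<times> 'a fm) list \<Rightarrow> 'a fm multiset" where
  "cboxes bs \<equiv> image_mset (\<lambda>(\<rho>, \<sigma>). CBox \<rho> \<sigma>) (mset bs)"

abbreviation cdias :: "('a fm \<times> 'a fm) list \<Rightarrow> 'a fm multiset" where
  "cdias ds \<equiv> image_mset (\<lambda>(\<xi>, \<chi>). CDia \<xi> \<chi>) (mset ds)"

abbreviation conseqs :: "('a fm \<times> 'a fm) list \<Rightarrow> 'a fm multiset" where
  "conseqs bs \<equiv> image_mset snd (mset bs)"

definition interderivable_at :: "nat \<Rightarrow> 'a fm \<Rightarrow> 'a fm \<Rightarrow> bool" where
  "interderivable_at n \<phi> \<rho> \<longleftrightarrow> SD n {#\<phi>#} (Some \<rho>) \<and> SD n {#\<rho>#} (Some \<phi>)"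

(*
  The
  context is left implicit: the principal formulas only have to form a sub-multiset of the
  antecedent.  dia_inference covers both diamond rules, D' = None being boxdia_cem.
*)
definition box_inference :: "nat \<Rightarrow> 'a fm multiset \<Rightarrow> 'a fm option \<Rightarrow> bool" where
  "box_inference n X D \<longleftrightarrow> (\<exists>\<phi> \<psi> bs. D = Some (CBox \<phi> \<psi>) \<and> cboxes bs \<subseteq># X
     \<and> (\<forall>(\<rho>, \<sigma>) \<in> set bs. interderivable_at n \<phi> \<rho>) \<and> SD n (conseqs bs) (Some \<psi>))"

definition dia_succedents_at :: "nat \<Rightarrow> 'a fm \<Rightarrow> 'a fm option \<Rightarrow> 'a fm option \<Rightarrow> bool" where
  "dia_succedents_at n \<phi> D' D \<longleftrightarrow>
     D' = None \<or> (\<exists>\<eta> \<theta>. D' = Some \<theta> \<and> D = Some (CDia \<eta> \<theta>) \<and> interderivable_at n \<phi> \<eta>)"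

definition dia_inference :: "nat \<Rightarrow> 'a fm multiset \<Rightarrow> 'a fm option \<Rightarrow> bool" where
  "dia_inference n X D \<longleftrightarrow> (\<exists>\<phi> \<psi> bs ds D'. add_mset (CDia \<phi> \<psi>) (cboxes bs + cdias ds) \<subseteq># X
     \<and> (\<forall>(\<rho>, \<sigma>) \<in> set (bs @ ds). interderivable_at n \<phi> \<rho>)
     \<and> SD n (add_mset \<psi> (conseqs bs + conseqs ds)) D' \<and> dia_succedents_at n \<phi> D' D)"

lemma box_inferenceI:
  assumes "D = Some (CBox \<phi> \<psi>)" "cboxes bs \<subseteq># X" "\<forall>(\<rho>, \<sigma>) \<in> set bs. interderivable_at n \<phi> \<rho>"
    "SD n (conseqs bs) (Some \<psi>)"
  shows "box_inference n X D"
  using assms unfolding box_inference_def by blast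

lemma dia_inferenceI:
  assumes "add_mset (CDia \<phi> \<psi>) (cboxes bs + cdias ds) \<subseteq># X"
    "\<forall>(\<rho>, \<sigma>) \<in> set (bs @ ds). interderivable_at n \<phi> \<rho>"
    "SD n (add_mset \<psi> (conseqs bs + conseqs ds)) D'"
    "dia_succedents_at n \<phi> D' D"
  shows "dia_inference n X D"
  using assms unfolding dia_inference_def by blast

lemma box_inferenceE:
  assumes "box_inference n X D"
  obtains \<phi> \<psi> bs where "D = Some (CBox \<phi> \<psi>)" "cboxes bs \<subseteq># X"
    "\<forall>(\<rho>, \<sigma>) \<in> set bs. interderivable_at n \<phi> \<rho>" "SD n (conseqs bs) (Some \<psi>)"
  using assms unfolding box_inference_def by blast

lemma dia_inferenceE:
  assumes "dia_inference n X D"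
  obtains \<phi> \<psi> bs ds D' where "add_mset (CDia \<phi> \<psi>) (cboxes bs + cdias ds) \<subseteq># X"
    "\<forall>(\<rho>, \<sigma>) \<in> set (bs @ ds). interderivable_at n \<phi> \<rho>"
    "SD n (add_mset \<psi> (conseqs bs + conseqs ds)) D'" "dia_succedents_at n \<phi> D' D"
  using assms unfolding dia_inference_def by blast

lemma SD_box_inference:
  assumes "box_inference n X D"
  shows "SD (Suc n) X D"
proof -
  obtain \<phi> \<psi> bs where D: "D = Some (CBox \<phi> \<psi>)" and sub: "cboxes bs \<subseteq># X"
    and eqv: "\<forall>(\<rho>, \<sigma>) \<in> set bs. interderivable_at n \<phi> \<rho>" and prem: "SD n (conseqs bs) (Some \<psi>)"
    using assms by (rule box_inferenceE)
  have "SD (Suc n) ((X - cboxes bs) + mset (map (\<lambda>(\<rho>, \<sigma>). CBox \<rho> \<sigma>) bs)) (Some (CBox \<phi> \<psi>))"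
    using eqv prem by (intro SD.box) (auto simp: interderivable_at_def)
  with sub D show ?thesis by simp
qed

lemma SD_dia_inference:
  assumes "dia_inference n X D"
  shows "SD (Suc n) X D"
proof -
  obtain \<phi> \<psi> bs ds D' where sub: "add_mset (CDia \<phi> \<psi>) (cboxes bs + cdias ds) \<subseteq># X"
    and eqv: "\<forall>(\<rho>, \<sigma>) \<in> set (bs @ ds). interderivable_at n \<phi> \<rho>"
    and prem: "SD n (add_mset \<psi> (conseqs bs + conseqs ds)) D'"
    and succ: "dia_succedents_at n \<phi> D' D"
    using assms by (rule dia_inferenceE)
  let ?\<Gamma> = "X - add_mset (CDia \<phi> \<psi>) (cboxes bs + cdias ds)"
  let ?X = "add_mset (CDia \<phi> \<psi>) (?\<Gamma> + mset (map (\<lambda>(\<rho>, \<sigma>). CBox \<rho> \<sigma>) bs)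
    + mset (map (\<lambda>(\<xi>, \<chi>). CDia \<xi> \<chi>) ds))"
  have X: "X = ?X"
    using subset_mset.diff_add[OF sub] by (simp add: ac_simps)
  from succ show ?thesis
    unfolding dia_succedents_at_def
  proof
    assume "D' = None"
    then have "SD (Suc n) ?X D"
      using eqv prem by (intro SD.boxdia_cem) (auto simp: interderivable_at_def)
    with X show ?thesis by simp
  next
    assume "\<exists>\<eta> \<theta>. D' = Some \<theta> \<and> D = Some (CDia \<eta> \<theta>) \<and> interderivable_at n \<phi> \<eta>"
    then obtain \<eta> \<theta> where "D' = Some \<theta>" "D = Some (CDia \<eta> \<theta>)" "interderivable_at n \<phi> \<eta>" by blast
    moreover have "SD (Suc n) ?X (Some (CDia \<eta> \<theta>))"
      by (rule SD.dia_cem) (use calculation eqv prem in \<open>auto simp: interderivable_at_def\<close>)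
    ultimately show ?thesis using X by simp
  qed
qed

lemma SD_cases [consumes 1, case_names init botL andL andR orL orR1 orR2 impR impL box dia]:
  assumes "SD n X D"
  obtains p \<Gamma> where "X = add_mset (Atom p) \<Gamma>" "D = Some (Atom p)"
  | "Bot \<in># X"
  | m A B \<Gamma> where "n = Suc m" "X = add_mset (And A B) \<Gamma>" "SD m (add_mset A (add_mset B \<Gamma>)) D"
  | m A B where "n = Suc m" "D = Some (And A B)" "SD m X (Some A)" "SD m X (Some B)"
  | m A B \<Gamma> where "n = Suc m" "X = add_mset (Or A B) \<Gamma>"
      "SD m (add_mset A \<Gamma>) D" "SD m (add_mset B \<Gamma>) D"
  | m A B where "n = Suc m" "D = Some (Or A B)" "SD m X (Some A)"
  | m A B where "n = Suc m" "D = Some (Or A B)" "SD m X (Some B)"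
  | m A B where "n = Suc m" "D = Some (Imp A B)" "SD m (add_mset A X) (Some B)"
  | m A B \<Gamma> where "n = Suc m" "X = add_mset (Imp A B) \<Gamma>"
      "SD m (add_mset (Imp A B) \<Gamma>) (Some A)" "SD m (add_mset B \<Gamma>) D"
  | m where "n = Suc m" "box_inference m X D"
  | m where "n = Suc m" "dia_inference m X D"
  using assms
proof (cases rule: SD.cases)
  case (box bs m \<phi> \<psi> \<Gamma>)
  then have "box_inference m X D"
    by (intro box_inferenceI[of _ \<phi> \<psi> bs]) (auto simp: interderivable_at_def)
  with box show ?thesis using that(10) by blast
next
  case (dia_cem bs m \<phi> ds \<eta> \<psi> \<theta> \<Gamma>)
  then have "dia_inference m X D"
    by (intro dia_inferenceI[of \<phi> \<psi> bs ds _ _ "Some \<theta>"]) (auto simp: interderivable_at_def dia_succedents_at_def)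
  with dia_cem show ?thesis using that(11) by blast
next
  case (boxdia_cem bs m \<phi> ds \<psi> \<Gamma>)
  then have "dia_inference m X D"
    by (intro dia_inferenceI[of \<phi> \<psi> bs ds _ _ None]) (auto simp: interderivable_at_def dia_succedents_at_def)
  with boxdia_cem show ?thesis using that(11) by blast
next
  case botL
  then show ?thesis using that(2) by simp
qed (use that in blast)+

section \<open>Height-preserving admissibility of the structural rules\<close>

lemma SD_add_height: "SD n X D \<Longrightarrow> SD (n + k) X D"
proof (induction rule: SD.induct)
  case (box bs n \<phi> \<psi> \<Gamma>)
  show ?case by (simp only: add_Suc) (rule SD.box, use box in auto)
next
  case (dia_cem bs n \<phi> ds \<eta> \<psi> \<theta> \<Gamma>)
  show ?case by (simp only: add_Suc) (rule SD.dia_cem, use dia_cem in auto)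
next
  case (boxdia_cem bs n \<phi> ds \<psi> \<Gamma>)
  show ?case by (simp only: add_Suc) (rule SD.boxdia_cem, use boxdia_cem in auto)
qed (auto intro: SD.intros)

lemma SD_mono: "SD n X D \<Longrightarrow> n \<le> m \<Longrightarrow> SD m X D"
  using SD_add_height[of n X D "m - n"] by simp

lemma SD_init_mem: "Atom p \<in># X \<Longrightarrow> SD n X (Some (Atom p))"
  by (metis SD.init insert_DiffM)

lemma SD_botL_mem: "Bot \<in># X \<Longrightarrow> SD n X D"
  by (metis SD.botL insert_DiffM)

lemma box_inference_mono: "box_inference n X D \<Longrightarrow> X \<subseteq># Y \<Longrightarrow> box_inference n Y D"
  unfolding box_inference_def using subset_mset.order_trans by blast

lemma dia_inference_mono: "dia_inference n X D \<Longrightarrow> X \<subseteq># Y \<Longrightarrow> dia_inference n Y D"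
  unfolding dia_inference_def using subset_mset.order_trans by blast

lemma subset_add_mset_not_mem: "K \<subseteq># add_mset F X \<Longrightarrow> F \<notin># K \<Longrightarrow> K \<subseteq># X"
  by (metis diff_single_trivial subset_eq_diff_conv add_mset_add_single)

lemma box_inference_drop:
  assumes "box_inference n (add_mset F X) D" "\<And>\<phi> \<psi>. F \<noteq> CBox \<phi> \<psi>"
  shows "box_inference n X D"
proof -
  obtain \<phi> \<psi> bs where "D = Some (CBox \<phi> \<psi>)" and sub: "cboxes bs \<subseteq># add_mset F X"
    and "\<forall>(\<rho>, \<sigma>) \<in> set bs. interderivable_at n \<phi> \<rho>" "SD n (conseqs bs) (Some \<psi>)"
    using assms(1) by (rule box_inferenceE)
  moreover have "cboxes bs \<subseteq># X"
    by (rule subset_add_mset_not_mem[OF sub]) (use assms(2) in auto)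
  ultimately show ?thesis by (intro box_inferenceI)
qed

lemma dia_inference_drop:
  assumes "dia_inference n (add_mset F X) D" "\<And>\<phi> \<psi>. F \<noteq> CBox \<phi> \<psi>" "\<And>\<phi> \<psi>. F \<noteq> CDia \<phi> \<psi>"
  shows "dia_inference n X D"
proof -
  obtain \<phi> \<psi> bs ds D' where sub: "add_mset (CDia \<phi> \<psi>) (cboxes bs + cdias ds) \<subseteq># add_mset F X"
    and "\<forall>(\<rho>, \<sigma>) \<in> set (bs @ ds). interderivable_at n \<phi> \<rho>"
      "SD n (add_mset \<psi> (conseqs bs + conseqs ds)) D'" "dia_succedents_at n \<phi> D' D"
    using assms(1) by (rule dia_inferenceE)
  moreover have "add_mset (CDia \<phi> \<psi>) (cboxes bs + cdias ds) \<subseteq># X"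
    by (rule subset_add_mset_not_mem[OF sub]) (use assms(2,3) in auto)
  ultimately show ?thesis by (intro dia_inferenceI)
qed

fun propositional_compound :: "'a fm \<Rightarrow> bool" where
  "propositional_compound (And _ _) \<longleftrightarrow> True"
| "propositional_compound (Or _ _) \<longleftrightarrow> True"
| "propositional_compound (Imp _ _) \<longleftrightarrow> True"
| "propositional_compound _ \<longleftrightarrow> False"

fun left_premises :: "nat \<Rightarrow> 'a fm \<Rightarrow> 'a fm multiset \<Rightarrow> 'a fm option \<Rightarrow> bool" where
  "left_premises m (And A B) \<Gamma> D \<longleftrightarrow> SD m (add_mset A (add_mset B \<Gamma>)) D"
| "left_premises m (Or A B) \<Gamma> D \<longleftrightarrow> SD m (add_mset A \<Gamma>) D \<and> SD m (add_mset B \<Gamma>) D"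
| "left_premises m (Imp A B) \<Gamma> D \<longleftrightarrow> SD m (add_mset (Imp A B) \<Gamma>) (Some A) \<and> SD m (add_mset B \<Gamma>) D"
| "left_premises m _ \<Gamma> D \<longleftrightarrow> False"

lemma add_mset_eq_add_mset_cases:
  assumes "add_mset F G = add_mset P \<Gamma>"
  obtains "F = P" "G = \<Gamma>" | K where "G = add_mset P K" "\<Gamma> = add_mset F K"
  using assms by (auto simp: add_eq_conv_ex)

lemma SD_invert_left:
  assumes "SD n (add_mset F G) D" "propositional_compound F"
    and principal: "\<And>m G D. left_premises m F G D \<Longrightarrow> SD m (R + G) D"
  shows "SD n (R + G) D"
  using assms(1)
proof (induction n arbitrary: G D rule: less_induct)
  case (less n)
  have not_axiom: "F \<noteq> Atom p" "F \<noteq> Bot" for p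
    using assms(2) by auto
  have not_modal: "F \<noteq> CBox \<phi> \<psi>" "F \<noteq> CDia \<phi> \<psi>" for \<phi> \<psi>
    using assms(2) by auto
  from less.prems show ?case
  proof (cases rule: SD_cases)
    case (init p \<Gamma>)
    then have "Atom p \<in># G" by (metis insert_noteq_member not_axiom(1))
    with init show ?thesis by (simp add: SD_init_mem)
  next
    case botL
    then show ?thesis using not_axiom(2) by (simp add: SD_botL_mem)
  next
    case (andL m A B \<Gamma>)
    from andL(2) show ?thesis
    proof (cases rule: add_mset_eq_add_mset_cases)
      case 1
      then show ?thesis using principal[of m G D] andL SD_mono[of m _ D n] by simp
    next
      case (2 K)
      then have "SD m (add_mset F (add_mset A (add_mset B K))) D"
        using andL(3) by (simp add: add_mset_commute)
      then have "SD m (R + add_mset A (add_mset B K)) D" using less.IH[of m "add_mset A (add_mset B K)"] andL(1) by blast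
      then show ?thesis using andL(1) 2 by (simp add: SD.andL)
    qed
  next
    case (orL m A B \<Gamma>)
    from orL(2) show ?thesis
    proof (cases rule: add_mset_eq_add_mset_cases)
      case 1
      then show ?thesis using principal[of m G D] orL SD_mono[of m _ D n] by simp
    next
      case (2 K)
      then have "SD m (add_mset F (add_mset A K)) D" "SD m (add_mset F (add_mset B K)) D"
        using orL(3,4) by (simp_all add: add_mset_commute)
      then have "SD m (R + add_mset A K) D" "SD m (R + add_mset B K) D"
        using less.IH[of m] orL(1) by blast+
      then show ?thesis using orL(1) 2 by (simp add: SD.orL)
    qed
  next
    case (impL m A B \<Gamma>)
    from impL(2) show ?thesis
    proof (cases rule: add_mset_eq_add_mset_cases)
      case 1
      then show ?thesis using principal[of m G D] impL SD_mono[of m _ D n] by simp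
    next
      case (2 K)
      then have "SD m (add_mset F (add_mset (Imp A B) K)) (Some A)" "SD m (add_mset F (add_mset B K)) D"
        using impL(3,4) by (simp_all add: add_mset_commute)
      then have "SD m (R + add_mset (Imp A B) K) (Some A)" "SD m (R + add_mset B K) D"
        using less.IH[of m] impL(1) by blast+
      then show ?thesis using impL(1) 2 by (simp add: SD.impL)
    qed
  next
    case (impR m A B)
    then have "SD m (add_mset F (add_mset A G)) (Some B)" by (simp add: add_mset_commute)
    then have "SD m (R + add_mset A G) (Some B)" using less.IH[of m] impR(1) by blast
    then show ?thesis using impR by (simp add: SD.impR)
  next
    case (box m)
    then have "box_inference m (R + G) D"
      using box_inference_drop not_modal box_inference_mono by (meson mset_subset_eq_add_right)
    then show ?thesis using box(1) by (simp add: SD_box_inference)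
  next
    case (dia m)
    then have "dia_inference m (R + G) D"
      using dia_inference_drop not_modal dia_inference_mono by (meson mset_subset_eq_add_right)
    then show ?thesis using dia(1) by (simp add: SD_dia_inference)
  next
    case (andR m A B)
    then show ?thesis using less.IH[of m G] by (simp add: SD.andR)
  next
    case (orR1 m A B)
    then show ?thesis using less.IH[of m G] by (simp add: SD.orR1)
  next
    case (orR2 m A B)
    then show ?thesis using less.IH[of m G] by (simp add: SD.orR2)
  qed
qed

lemma SD_invert_andL: "SD n (add_mset (And A B) G) D \<Longrightarrow> SD n (add_mset A (add_mset B G)) D"
  using SD_invert_left[where R = "{#A, B#}"] by fastforce

lemma SD_invert_orL1: "SD n (add_mset (Or A B) G) D \<Longrightarrow> SD n (add_mset A G) D"
  using SD_invert_left[where R = "{#A#}"] by fastforce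

lemma SD_invert_orL2: "SD n (add_mset (Or A B) G) D \<Longrightarrow> SD n (add_mset B G) D"
  using SD_invert_left[where R = "{#B#}"] by fastforce

lemma SD_invert_impL: "SD n (add_mset (Imp A B) G) D \<Longrightarrow> SD n (add_mset B G) D"
  using SD_invert_left[where R = "{#B#}"] by fastforce

lemma mset_subseteq_if_distinct: "distinct xs \<Longrightarrow> set xs \<subseteq> set_mset Y \<Longrightarrow> mset xs \<subseteq># Y"
  by (metis finite_set_mset mset_set_set mset_set_set_mset_msubset subset_imp_msubset_mset_set
      subset_mset.order_trans)

lemma box_inference_set_mono:
  fixes X Y :: "'a fm multiset"
  assumes "box_inference n X D" "set_mset X \<subseteq> set_mset Y"
    and premises_set_mono: "\<And>X' Y' (D' :: 'a fm option). SD n X' D' \<Longrightarrow> set_mset X' \<subseteq> set_mset Y' \<Longrightarrow> SD n Y' D'"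
  shows "box_inference n Y D"
proof -
  obtain \<phi> \<psi> bs where D: "D = Some (CBox \<phi> \<psi>)" and sub: "cboxes bs \<subseteq># X"
    and eqv: "\<forall>(\<rho>, \<sigma>) \<in> set bs. interderivable_at n \<phi> \<rho>" and prem: "SD n (conseqs bs) (Some \<psi>)"
    using assms(1) by (rule box_inferenceE)
  let ?bs = "remdups bs"
  have "distinct (map (\<lambda>(\<rho>, \<sigma>). CBox \<rho> \<sigma>) ?bs)"
    by (auto simp: distinct_map inj_on_def)
  moreover have "set (map (\<lambda>(\<rho>, \<sigma>). CBox \<rho> \<sigma>) ?bs) \<subseteq> set_mset Y"
    using set_mset_mono[OF sub] assms(2) by auto
  ultimately have "mset (map (\<lambda>(\<rho>, \<sigma>). CBox \<rho> \<sigma>) ?bs) \<subseteq># Y" by (rule mset_subseteq_if_distinct)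
  then have "cboxes ?bs \<subseteq># Y" by simp
  moreover have "SD n (conseqs ?bs) (Some \<psi>)" by (rule premises_set_mono[OF prem]) auto
  ultimately show ?thesis using D eqv by (intro box_inferenceI) auto
qed

lemma dia_inference_set_mono:
  fixes X Y :: "'a fm multiset"
  assumes "dia_inference n X D" "set_mset X \<subseteq> set_mset Y"
    and premises_set_mono: "\<And>X' Y' (D' :: 'a fm option). SD n X' D' \<Longrightarrow> set_mset X' \<subseteq> set_mset Y' \<Longrightarrow> SD n Y' D'"
  shows "dia_inference n Y D"
proof -
  obtain \<phi> \<psi> bs ds D' where sub: "add_mset (CDia \<phi> \<psi>) (cboxes bs + cdias ds) \<subseteq># X"
    and eqv: "\<forall>(\<rho>, \<sigma>) \<in> set (bs @ ds). interderivable_at n \<phi> \<rho>"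
    and prem: "SD n (add_mset \<psi> (conseqs bs + conseqs ds)) D'" and succ: "dia_succedents_at n \<phi> D' D"
    using assms(1) by (rule dia_inferenceE)
  \<comment> \<open>A copy of the principal diamond among the side diamonds is dropped as well.\<close>
  let ?bs = "remdups bs" and ?ds = "remdups (removeAll (\<phi>, \<psi>) ds)"
  have "distinct (CDia \<phi> \<psi> # map (\<lambda>(\<rho>, \<sigma>). CBox \<rho> \<sigma>) ?bs @ map (\<lambda>(\<rho>, \<sigma>). CDia \<rho> \<sigma>) ?ds)"
    by (auto simp: distinct_map inj_on_def)
  moreover have "set (CDia \<phi> \<psi> # map (\<lambda>(\<rho>, \<sigma>). CBox \<rho> \<sigma>) ?bs @ map (\<lambda>(\<rho>, \<sigma>). CDia \<rho> \<sigma>) ?ds)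
      \<subseteq> set_mset Y"
    using set_mset_mono[OF sub] assms(2) by auto
  ultimately have "mset (CDia \<phi> \<psi> # map (\<lambda>(\<rho>, \<sigma>). CBox \<rho> \<sigma>) ?bs @ map (\<lambda>(\<rho>, \<sigma>). CDia \<rho> \<sigma>) ?ds)
      \<subseteq># Y"
    by (rule mset_subseteq_if_distinct)
  then have "add_mset (CDia \<phi> \<psi>) (cboxes ?bs + cdias ?ds) \<subseteq># Y" by simp
  moreover have "SD n (add_mset \<psi> (conseqs ?bs + conseqs ?ds)) D'"
    by (rule premises_set_mono[OF prem]) force
  ultimately show ?thesis using eqv succ by (intro dia_inferenceI) auto
qed

lemma SD_set_mono:
  fixes X Y :: "'a fm multiset"
  shows "SD n X D \<Longrightarrow> set_mset X \<subseteq> set_mset Y \<Longrightarrow> SD n Y D"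
proof (induction n arbitrary: X Y D rule: less_induct)
  case (less n)
  have IH: "\<And>X' Y' (D' :: 'a fm option). SD m X' D' \<Longrightarrow> set_mset X' \<subseteq> set_mset Y' \<Longrightarrow> SD m Y' D'"
    if "n = Suc m" for m
    using less.IH that by blast
  have member: "Y = add_mset F (Y - {#F#})" if "X = add_mset F \<Gamma>" for F \<Gamma>
    using less.prems(2) that by (simp add: insert_DiffM)
  from less.prems(1) show ?case
  proof (cases rule: SD_cases)
    case (init p \<Gamma>)
    then show ?thesis using less.prems(2) by (simp add: SD_init_mem)
  next
    case botL
    then show ?thesis using less.prems(2) by (auto intro: SD_botL_mem)
  next
    case (andL m A B \<Gamma>)
    define Y' where "Y' = Y - {#And A B#}"
    have Y: "Y = add_mset (And A B) Y'" unfolding Y'_def using member andL(2) .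
    have "SD m (add_mset (And A B) (add_mset A (add_mset B Y'))) D"
      by (rule IH[OF andL(1,3)]) (use andL(2) less.prems(2) Y in auto)
    then have "SD m (add_mset A (add_mset B (add_mset A (add_mset B Y')))) D"
      by (rule SD_invert_andL)
    then have "SD m (add_mset A (add_mset B Y')) D"
      by (rule IH[OF andL(1)]) auto
    then show ?thesis using Y andL(1) by (simp add: SD.andL)
  next
    case (orL m A B \<Gamma>)
    define Y' where "Y' = Y - {#Or A B#}"
    have Y: "Y = add_mset (Or A B) Y'" unfolding Y'_def using member orL(2) .
    have "SD m (add_mset (Or A B) (add_mset A Y')) D" "SD m (add_mset (Or A B) (add_mset B Y')) D"
      by (rule IH[OF orL(1,3)], use orL(2) less.prems(2) Y in auto)
        (rule IH[OF orL(1,4)], use orL(2) less.prems(2) Y in auto)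
    then have "SD m (add_mset A (add_mset A Y')) D" "SD m (add_mset B (add_mset B Y')) D"
      by (blast dest: SD_invert_orL1 SD_invert_orL2)+
    then have "SD m (add_mset A Y') D" "SD m (add_mset B Y') D"
      by (auto elim: IH[OF orL(1)])
    then show ?thesis using Y orL(1) by (simp add: SD.orL)
  next
    case (impL m A B \<Gamma>)
    define Y' where "Y' = Y - {#Imp A B#}"
    have Y: "Y = add_mset (Imp A B) Y'" unfolding Y'_def using member impL(2) .
    have "SD m (add_mset (Imp A B) Y') (Some A)" "SD m (add_mset (Imp A B) (add_mset B Y')) D"
      by (rule IH[OF impL(1,3)], use impL(2) less.prems(2) Y in auto)
        (rule IH[OF impL(1,4)], use impL(2) less.prems(2) Y in auto)
    moreover have "SD m (add_mset B Y') D"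
      using SD_invert_impL[OF calculation(2)] by (rule IH[OF impL(1)]) auto
    ultimately show ?thesis using Y impL(1) by (simp add: SD.impL)
  next
    case (andR m A B)
    then show ?thesis using IH[OF andR(1)] less.prems(2) by (auto intro: SD.andR)
  next
    case (orR1 m A B)
    then show ?thesis using IH[OF orR1(1)] less.prems(2) by (auto intro: SD.orR1)
  next
    case (orR2 m A B)
    then show ?thesis using IH[OF orR2(1)] less.prems(2) by (auto intro: SD.orR2)
  next
    case (impR m A B)
    have "SD m (add_mset A Y) (Some B)"
      by (rule IH[OF impR(1,3)]) (use less.prems(2) in auto)
    then show ?thesis using impR by (simp add: SD.impR)
  next
    case (box m)
    have "box_inference m Y D"
      using box(2) less.prems(2) IH[OF box(1)] by (rule box_inference_set_mono)
    then show ?thesis using box(1) by (simp add: SD_box_inference)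
  next
    case (dia m)
    have "dia_inference m Y D"
      using dia(2) less.prems(2) IH[OF dia(1)] by (rule dia_inference_set_mono)
    then show ?thesis using dia(1) by (simp add: SD_dia_inference)
  qed
qed

lemma SD_weaken: "SD n X D \<Longrightarrow> X \<subseteq># Y \<Longrightarrow> SD n Y D"
  by (erule SD_set_mono) (rule set_mset_mono)

lemma SD_contract: "SD n (add_mset \<phi> (add_mset \<phi> X)) D \<Longrightarrow> SD n (add_mset \<phi> X) D"
  by (erule SD_set_mono) simp

lemma SD_wR: "SD n X None \<Longrightarrow> SD n X (Some \<phi>)"
proof -
  have "SD n X D \<Longrightarrow> D = None \<Longrightarrow> SD n X (Some \<phi>)" for D
  proof (induction rule: SD.induct)
    case (boxdia_cem bs n \<phi>' ds \<psi> \<Gamma> \<Delta>)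
    show ?case by (rule SD.boxdia_cem) (use boxdia_cem in auto)
  qed (auto intro: SD.intros)
  then show "SD n X None \<Longrightarrow> SD n X (Some \<phi>)" by blast
qed

lemma SDerivableI: "SD n X D \<Longrightarrow> SDerivable X D"
  unfolding SDerivable_def by blast

lemma SDerivable_common_height:
  assumes "SDerivable X D" "SDerivable Y E"
  obtains n where "SD n X D" "SD n Y E"
proof -
  obtain n m where "SD n X D" "SD m Y E" using assms unfolding SDerivable_def by blast
  then have "SD (max n m) X D" "SD (max n m) Y E" by (auto elim: SD_mono)
  then show ?thesis by (rule that)
qed

lemma finite_common_bound:
  fixes P :: "'b \<Rightarrow> nat \<Rightarrow> bool"
  assumes "finite S" "\<forall>x\<in>S. \<exists>n. P x n" "\<And>x n m. P x n \<Longrightarrow> n \<le> m \<Longrightarrow> P x m"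
  shows "\<exists>N. \<forall>x\<in>S. P x N"
  using assms(1,2)
proof (induction rule: finite_induct)
  case (insert x S)
  then obtain N n where "\<forall>y\<in>S. P y N" "P x n" by auto
  then have "\<forall>y\<in>insert x S. P y (max N n)" using assms(3) by (auto intro: max.cobounded1 max.cobounded2)
  then show ?case by blast
qed simp

definition interderivable :: "'a fm \<Rightarrow> 'a fm \<Rightarrow> bool" where
  "interderivable \<phi> \<rho> \<longleftrightarrow> SDerivable {#\<phi>#} (Some \<rho>) \<and> SDerivable {#\<rho>#} (Some \<phi>)"

lemma interderivable_at_mono: "interderivable_at n \<phi> \<rho> \<Longrightarrow> n \<le> m \<Longrightarrow> interderivable_at m \<phi> \<rho>"
  unfolding interderivable_at_def using SD_mono by blast

lemma interderivable_at_list_mono: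
  "\<forall>(\<rho>, \<sigma>) \<in> set bs. interderivable_at n \<phi> \<rho> \<Longrightarrow> n \<le> m
    \<Longrightarrow> \<forall>(\<rho>, \<sigma>) \<in> set bs. interderivable_at m \<phi> \<rho>"
  using interderivable_at_mono by fast

lemma interderivable_iff: "interderivable \<phi> \<rho> \<longleftrightarrow> (\<exists>n. interderivable_at n \<phi> \<rho>)"
  unfolding interderivable_def interderivable_at_def
  by (meson SDerivableI SDerivable_common_height)

lemma interderivable_common_height:
  assumes "\<forall>(\<rho>, \<sigma>) \<in> set bs. interderivable \<phi> \<rho>"
  obtains N where "\<forall>(\<rho>, \<sigma>) \<in> set bs. interderivable_at N \<phi> \<rho>"
proof -
  have "\<exists>N. \<forall>p \<in> set bs. interderivable_at N \<phi> (fst p)"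
    by (rule finite_common_bound) (use assms in \<open>auto simp: interderivable_iff intro: interderivable_at_mono\<close>)
  then show ?thesis using that by (auto simp: case_prod_beta)
qed

lemma SDerivable_weaken: "SDerivable X D \<Longrightarrow> X \<subseteq># Y \<Longrightarrow> SDerivable Y D"
  unfolding SDerivable_def using SD_weaken by blast

lemma SDerivable_set_mono: "SDerivable X D \<Longrightarrow> set_mset X \<subseteq> set_mset Y \<Longrightarrow> SDerivable Y D"
  unfolding SDerivable_def using SD_set_mono by blast

lemma SDerivable_init: "Atom p \<in># X \<Longrightarrow> SDerivable X (Some (Atom p))"
  by (rule SDerivableI[OF SD_init_mem])

lemma SDerivable_botL: "Bot \<in># X \<Longrightarrow> SDerivable X D"
  by (rule SDerivableI[OF SD_botL_mem])

lemma SDerivable_andL: "SDerivable (add_mset A (add_mset B X)) D \<Longrightarrow> SDerivable (add_mset (And A B) X) D"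
  unfolding SDerivable_def using SD.andL by blast

lemma SDerivable_andR:
  assumes "SDerivable X (Some A)" "SDerivable X (Some B)"
  shows "SDerivable X (Some (And A B))"
  using assms by (rule SDerivable_common_height) (rule SDerivableI[OF SD.andR])

lemma SDerivable_orL:
  assumes "SDerivable (add_mset A X) D" "SDerivable (add_mset B X) D"
  shows "SDerivable (add_mset (Or A B) X) D"
  using assms by (rule SDerivable_common_height) (rule SDerivableI[OF SD.orL])

lemma SDerivable_orR1: "SDerivable X (Some A) \<Longrightarrow> SDerivable X (Some (Or A B))"
  unfolding SDerivable_def using SD.orR1 by blast

lemma SDerivable_orR2: "SDerivable X (Some B) \<Longrightarrow> SDerivable X (Some (Or A B))"
  unfolding SDerivable_def using SD.orR2 by blast

lemma SDerivable_impR: "SDerivable (add_mset A X) (Some B) \<Longrightarrow> SDerivable X (Some (Imp A B))"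
  unfolding SDerivable_def using SD.impR by blast

lemma SDerivable_impL:
  assumes "SDerivable (add_mset (Imp A B) X) (Some A)" "SDerivable (add_mset B X) D"
  shows "SDerivable (add_mset (Imp A B) X) D"
  using assms by (rule SDerivable_common_height) (rule SDerivableI[OF SD.impL])

lemma SDerivable_box:
  assumes "cboxes bs \<subseteq># X" "\<forall>(\<rho>, \<sigma>) \<in> set bs. interderivable \<phi> \<rho>"
    "SDerivable (conseqs bs) (Some \<psi>)"
  shows "SDerivable X (Some (CBox \<phi> \<psi>))"
proof -
  obtain N where eqv: "\<forall>(\<rho>, \<sigma>) \<in> set bs. interderivable_at N \<phi> \<rho>"
    using assms(2) by (rule interderivable_common_height)
  obtain n where prem: "SD n (conseqs bs) (Some \<psi>)" using assms(3) unfolding SDerivable_def by blast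
  have "box_inference (max N n) X (Some (CBox \<phi> \<psi>))"
    using interderivable_at_list_mono[OF eqv] SD_mono[OF prem] by (intro box_inferenceI[OF refl assms(1)]) auto
  then show ?thesis by (rule SDerivableI[OF SD_box_inference])
qed

lemma SDerivable_dia:
  assumes "add_mset (CDia \<phi> \<psi>) (cboxes bs + cdias ds) \<subseteq># X"
    "\<forall>(\<rho>, \<sigma>) \<in> set (bs @ ds). interderivable \<phi> \<rho>" "interderivable \<phi> \<eta>"
    "SDerivable (add_mset \<psi> (conseqs bs + conseqs ds)) (Some \<theta>)"
  shows "SDerivable X (Some (CDia \<eta> \<theta>))"
proof -
  have "\<forall>(\<rho>, \<sigma>) \<in> set ((\<eta>, \<theta>) # bs @ ds). interderivable \<phi> \<rho>"
    using assms(2,3) by auto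
  then obtain N where eqv: "\<forall>(\<rho>, \<sigma>) \<in> set ((\<eta>, \<theta>) # bs @ ds). interderivable_at N \<phi> \<rho>"
    by (rule interderivable_common_height)
  obtain n where prem: "SD n (add_mset \<psi> (conseqs bs + conseqs ds)) (Some \<theta>)"
    using assms(4) unfolding SDerivable_def by blast
  have "dia_inference (max N n) X (Some (CDia \<eta> \<theta>))"
    using interderivable_at_list_mono[OF eqv] SD_mono[OF prem]
    by (intro dia_inferenceI[OF assms(1), where D' = "Some \<theta>"]) (auto simp: dia_succedents_at_def)
  then show ?thesis by (rule SDerivableI[OF SD_dia_inference])
qed

lemma SDerivable_boxdia:
  assumes "add_mset (CDia \<phi> \<psi>) (cboxes bs + cdias ds) \<subseteq># X"
    "\<forall>(\<rho>, \<sigma>) \<in> set (bs @ ds). interderivable \<phi> \<rho>"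
    "SDerivable (add_mset \<psi> (conseqs bs + conseqs ds)) None"
  shows "SDerivable X D"
proof -
  obtain N where eqv: "\<forall>(\<rho>, \<sigma>) \<in> set (bs @ ds). interderivable_at N \<phi> \<rho>"
    using assms(2) by (rule interderivable_common_height)
  obtain n where prem: "SD n (add_mset \<psi> (conseqs bs + conseqs ds)) None"
    using assms(3) unfolding SDerivable_def by blast
  have "dia_inference (max N n) X D"
    using interderivable_at_list_mono[OF eqv] SD_mono[OF prem]
    by (intro dia_inferenceI[OF assms(1), where D' = None]) (auto simp: dia_succedents_at_def)
  then show ?thesis by (rule SDerivableI[OF SD_dia_inference])
qed

definition dia_succedents :: "'a fm \<Rightarrow> 'a fm option \<Rightarrow> 'a fm option \<Rightarrow> bool" where
  "dia_succedents \<phi> D' D \<longleftrightarrow>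
     D' = None \<or> (\<exists>\<eta> \<theta>. D' = Some \<theta> \<and> D = Some (CDia \<eta> \<theta>) \<and> interderivable \<phi> \<eta>)"

lemma SDerivable_dia_inference:
  assumes "add_mset (CDia \<phi> \<psi>) (cboxes bs + cdias ds) \<subseteq># X"
    "\<forall>(\<rho>, \<sigma>) \<in> set (bs @ ds). interderivable \<phi> \<rho>"
    "SDerivable (add_mset \<psi> (conseqs bs + conseqs ds)) D'" "dia_succedents \<phi> D' D"
  shows "SDerivable X D"
  using assms(4) unfolding dia_succedents_def
proof
  assume "D' = None"
  then show ?thesis using SDerivable_boxdia[OF assms(1,2)] assms(3) by simp
next
  assume "\<exists>\<eta> \<theta>. D' = Some \<theta> \<and> D = Some (CDia \<eta> \<theta>) \<and> interderivable \<phi> \<eta>"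
  then show ?thesis using SDerivable_dia[OF assms(1,2)] assms(3) by auto
qed

lemma interderivable_atD: "interderivable_at n \<phi> \<rho> \<Longrightarrow> interderivable \<phi> \<rho>"
  unfolding interderivable_at_def interderivable_def by (blast intro: SDerivableI)

lemma box_inference_SDerivableE:
  assumes "box_inference n X D"
  obtains \<phi> \<psi> bs where "D = Some (CBox \<phi> \<psi>)" "cboxes bs \<subseteq># X"
    "\<forall>(\<rho>, \<sigma>) \<in> set bs. interderivable \<phi> \<rho>" "SDerivable (conseqs bs) (Some \<psi>)"
  using assms by (elim box_inferenceE) (fastforce intro: SDerivableI interderivable_atD)

lemma dia_inference_SDerivableE:
  assumes "dia_inference n X D"
  obtains \<phi> \<psi> bs ds D' where "add_mset (CDia \<phi> \<psi>) (cboxes bs + cdias ds) \<subseteq># X"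
    "\<forall>(\<rho>, \<sigma>) \<in> set (bs @ ds). interderivable \<phi> \<rho>"
    "SDerivable (add_mset \<psi> (conseqs bs + conseqs ds)) D'" "dia_succedents \<phi> D' D"
proof -
  obtain \<phi> \<psi> bs ds D' where "add_mset (CDia \<phi> \<psi>) (cboxes bs + cdias ds) \<subseteq># X"
    "\<forall>(\<rho>, \<sigma>) \<in> set (bs @ ds). interderivable_at n \<phi> \<rho>"
    "SD n (add_mset \<psi> (conseqs bs + conseqs ds)) D'" "dia_succedents_at n \<phi> D' D"
    using assms by (rule dia_inferenceE)
  moreover have "dia_succedents \<phi> D' D"
    using calculation(4) unfolding dia_succedents_at_def dia_succedents_def by (blast intro: interderivable_atD)
  ultimately show thesis by (fastforce intro: that SDerivableI interderivable_atD)
qed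

lemma SDerivable_id: "SDerivable (add_mset A X) (Some A)"
proof (induction A arbitrary: X)
  case (Atom p)
  then show ?case by (simp add: SDerivable_init)
next
  case Bot
  then show ?case by (simp add: SDerivable_botL)
next
  case (And A B)
  have "SDerivable (add_mset A (add_mset B X)) (Some B)"
    using And.IH(2)[of "add_mset A X"] by (simp add: add_mset_commute)
  with And.IH(1) have "SDerivable (add_mset A (add_mset B X)) (Some (And A B))"
    by (rule SDerivable_andR)
  then show ?case by (rule SDerivable_andL)
next
  case (Or A B)
  show ?case
    by (rule SDerivable_orL) (rule SDerivable_orR1 SDerivable_orR2, rule Or.IH)+
next
  case (Imp A B)
  have "SDerivable (add_mset (Imp A B) (add_mset A X)) (Some A)"
    using Imp.IH(1)[of "add_mset (Imp A B) X"] by (simp add: add_mset_commute)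
  then have "SDerivable (add_mset (Imp A B) (add_mset A X)) (Some B)"
    using Imp.IH(2) by (rule SDerivable_impL)
  then show ?case by (intro SDerivable_impR) (simp add: add_mset_commute)
next
  case (CBox A B)
  have "interderivable A A" "SDerivable {#B#} (Some B)"
    using CBox.IH[of "{#}"] by (simp_all add: interderivable_def)
  then show ?case using SDerivable_box[of "[(A, B)]"] by simp
next
  case (CDia A B)
  have "interderivable A A" "SDerivable {#B#} (Some B)"
    using CDia.IH[of "{#}"] by (simp_all add: interderivable_def)
  then show ?case using SDerivable_dia[of A B "[]" "[]"] by simp
qed

lemma SDerivable_id_mem: "A \<in># X \<Longrightarrow> SDerivable X (Some A)"
  by (metis SDerivable_id insert_DiffM)

section \<open>Cut\<close>

lemma mset_map_member_cases:
  assumes "mset (map f xs) \<subseteq># add_mset A X"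
  obtains "mset (map f xs) \<subseteq># X" | x where "A = f x" "x \<in> set xs"
  using assms subset_add_mset_not_mem by (metis imageE in_multiset_in_set set_map)

lemma box_inference_add_mset_cases:
  assumes "box_inference n (add_mset A \<Gamma>') D"
  obtains "SDerivable (\<Gamma> + \<Gamma>') D"
  | \<phi> \<psi> \<phi>2 \<psi>2 bs2 where "A = CBox \<phi> \<psi>" "D = Some (CBox \<phi>2 \<psi>2)" "cboxes bs2 \<subseteq># add_mset A \<Gamma>'"
      "(\<phi>, \<psi>) \<in> set bs2" "\<forall>(\<rho>, \<sigma>) \<in> set bs2. interderivable \<phi>2 \<rho>" "SDerivable (conseqs bs2) (Some \<psi>2)"
proof -
  obtain \<phi>2 \<psi>2 bs2 where D: "D = Some (CBox \<phi>2 \<psi>2)" and sub: "cboxes bs2 \<subseteq># add_mset A \<Gamma>'"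
    and eqv: "\<forall>(\<rho>, \<sigma>) \<in> set bs2. interderivable \<phi>2 \<rho>" and prem: "SDerivable (conseqs bs2) (Some \<psi>2)"
    using assms by (rule box_inference_SDerivableE)
  from sub show thesis
    unfolding mset_map[symmetric]
  proof (cases rule: mset_map_member_cases)
    case 1
    then have "cboxes bs2 \<subseteq># \<Gamma> + \<Gamma>'" by (auto intro: subset_mset.order_trans)
    then show thesis using that(1) SDerivable_box eqv prem D by blast
  next
    case (2 p)
    then show thesis using that(2) D sub eqv prem by (cases p) auto
  qed
qed

lemma dia_inference_add_mset_cases:
  assumes "dia_inference n (add_mset A \<Gamma>') D"
  obtains "SDerivable (\<Gamma> + \<Gamma>') D"
  | (box) \<phi> \<psi> \<phi>2 \<psi>2 bs2 ds2 D' where "A = CBox \<phi> \<psi>"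
      "add_mset (CDia \<phi>2 \<psi>2) (cboxes bs2 + cdias ds2) \<subseteq># add_mset A \<Gamma>'" "(\<phi>, \<psi>) \<in> set bs2"
      "\<forall>(\<rho>, \<sigma>) \<in> set (bs2 @ ds2). interderivable \<phi>2 \<rho>"
      "SDerivable (add_mset \<psi>2 (conseqs bs2 + conseqs ds2)) D'" "dia_succedents \<phi>2 D' D"
  | (principal) \<eta> \<theta> bs2 ds2 D' where "A = CDia \<eta> \<theta>" "cboxes bs2 + cdias ds2 \<subseteq># \<Gamma>'"
      "\<forall>(\<rho>, \<sigma>) \<in> set (bs2 @ ds2). interderivable \<eta> \<rho>"
      "SDerivable (add_mset \<theta> (conseqs bs2 + conseqs ds2)) D'" "dia_succedents \<eta> D' D"
  | (side) \<eta> \<theta> \<phi>2 \<psi>2 bs2 ds2 D' where "A = CDia \<eta> \<theta>"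
      "add_mset (CDia \<phi>2 \<psi>2) (cboxes bs2 + cdias ds2) \<subseteq># add_mset A \<Gamma>'" "(\<eta>, \<theta>) \<in> set ds2"
      "\<forall>(\<rho>, \<sigma>) \<in> set (bs2 @ ds2). interderivable \<phi>2 \<rho>"
      "SDerivable (add_mset \<psi>2 (conseqs bs2 + conseqs ds2)) D'" "dia_succedents \<phi>2 D' D"
proof -
  obtain \<phi>2 \<psi>2 bs2 ds2 D' where sub: "add_mset (CDia \<phi>2 \<psi>2) (cboxes bs2 + cdias ds2) \<subseteq># add_mset A \<Gamma>'"
    and eqv: "\<forall>(\<rho>, \<sigma>) \<in> set (bs2 @ ds2). interderivable \<phi>2 \<rho>"
    and prem: "SDerivable (add_mset \<psi>2 (conseqs bs2 + conseqs ds2)) D'" and succ: "dia_succedents \<phi>2 D' D"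
    using assms by (rule dia_inference_SDerivableE)
  consider "A = CDia \<phi>2 \<psi>2" | "A \<in># cboxes bs2" | "A \<in># cdias ds2"
    | "A \<notin># add_mset (CDia \<phi>2 \<psi>2) (cboxes bs2 + cdias ds2)"
    by auto
  then show thesis
  proof cases
    case 1
    then show thesis using principal sub eqv prem succ by simp
  next
    case 2
    then show thesis using box sub eqv prem succ by auto
  next
    case 3
    then show thesis using side sub eqv prem succ by auto
  next
    case 4
    then have "add_mset (CDia \<phi>2 \<psi>2) (cboxes bs2 + cdias ds2) \<subseteq># \<Gamma> + \<Gamma>'"
      using subset_add_mset_not_mem[OF sub] by (auto intro: subset_mset.order_trans)
    then show thesis using that(1) SDerivable_dia_inference eqv prem succ by blast
  qed
qed

definition sizes_below :: "nat \<Rightarrow> 'a fm multiset \<Rightarrow> 'a fm option \<Rightarrow> bool" where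
  "sizes_below M X D \<longleftrightarrow> (\<forall>\<phi> \<in> set_mset X \<union> set_option D. size \<phi> < M)"

definition cut_admissible :: "nat \<Rightarrow> 'a fm \<Rightarrow> bool" where
  "cut_admissible M A \<longleftrightarrow> (\<forall>\<Gamma> \<Gamma>' D. SDerivable \<Gamma> (Some A) \<longrightarrow> SDerivable (add_mset A \<Gamma>') D
     \<longrightarrow> sizes_below M (add_mset A (\<Gamma> + \<Gamma>')) D \<longrightarrow> SDerivable (\<Gamma> + \<Gamma>') D)"

lemma cut_admissibleD:
  "cut_admissible M A \<Longrightarrow> SDerivable \<Gamma> (Some A) \<Longrightarrow> SDerivable (add_mset A \<Gamma>') D
    \<Longrightarrow> sizes_below M (add_mset A (\<Gamma> + \<Gamma>')) D \<Longrightarrow> SDerivable (\<Gamma> + \<Gamma>') D"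
  unfolding cut_admissible_def by blast

lemma sizes_below_mono: "sizes_below M X D \<Longrightarrow> K \<subseteq># X \<Longrightarrow> sizes_below M K None"
  unfolding sizes_below_def by (auto dest: mset_subset_eqD)

lemma sizes_below_cboxes:
  "sizes_below (Suc M) (cboxes bs) None \<Longrightarrow> \<forall>(\<rho>, \<sigma>) \<in> set bs. size \<rho> < M \<and> size \<sigma> < M"
  unfolding sizes_below_def by auto

lemma sizes_below_cdias:
  "sizes_below (Suc M) (cdias ds) None \<Longrightarrow> \<forall>(\<rho>, \<sigma>) \<in> set ds. size \<rho> < M \<and> size \<sigma> < M"
  unfolding sizes_below_def by auto

lemma sizes_below_cboxes_cdias:
  assumes "sizes_below (Suc M) (cboxes bs + cdias ds) None"
  shows "\<forall>(\<rho>, \<sigma>) \<in> set (bs @ ds). size \<rho> < M \<and> size \<sigma> < M"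
  using sizes_below_cboxes[OF sizes_below_mono[OF assms, of "cboxes bs"]]
    sizes_below_cdias[OF sizes_below_mono[OF assms, of "cdias ds"]]
  by auto

lemma sizes_below_dia_principal:
  assumes "sizes_below (Suc M) (add_mset (CDia \<phi> \<psi>) (cboxes bs + cdias ds)) None"
  shows "size \<phi> < M" "size \<psi> < M" "\<forall>(\<rho>, \<sigma>) \<in> set (bs @ ds). size \<rho> < M \<and> size \<sigma> < M"
proof -
  have "\<forall>x \<in># cboxes bs. size x < Suc M" "\<forall>x \<in># cdias ds. size x < Suc M"
    using assms unfolding sizes_below_def by auto
  then show "\<forall>(\<rho>, \<sigma>) \<in> set (bs @ ds). size \<rho> < M \<and> size \<sigma> < M" by auto
  show "size \<phi> < M" "size \<psi> < M" using assms unfolding sizes_below_def by auto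
qed

lemma interderivable_sym: "interderivable \<phi> \<rho> \<Longrightarrow> interderivable \<rho> \<phi>"
  unfolding interderivable_def by blast

lemma interderivable_trans:
  assumes "cut_admissible M \<rho>" "interderivable \<phi> \<rho>" "interderivable \<rho> \<chi>"
    "size \<phi> < M" "size \<rho> < M" "size \<chi> < M"
  shows "interderivable \<phi> \<chi>"
proof -
  have "SDerivable ({#\<phi>#} + {#}) (Some \<chi>)"
    by (rule cut_admissibleD[OF assms(1)]) (use assms in \<open>simp_all add: interderivable_def sizes_below_def\<close>)
  moreover have "SDerivable ({#\<chi>#} + {#}) (Some \<phi>)"
    by (rule cut_admissibleD[OF assms(1)]) (use assms in \<open>simp_all add: interderivable_def sizes_below_def\<close>)
  ultimately show ?thesis by (simp add: interderivable_def)
qed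

lemma interderivable_trans_all:
  assumes "\<forall>(\<rho>, \<sigma>) \<in> set bs. interderivable \<phi> \<rho>" "interderivable \<phi>' \<phi>" "cut_admissible M \<phi>"
    "size \<phi>' < M" "size \<phi> < M" "\<forall>(\<rho>, \<sigma>) \<in> set bs. size \<rho> < M"
  shows "\<forall>(\<rho>, \<sigma>) \<in> set bs. interderivable \<phi>' \<rho>"
  using assms interderivable_trans[OF assms(3,2)] by fast

lemma cut_and:
  assumes "cut_admissible M B" "cut_admissible M C"
    and "SDerivable \<Gamma> (Some B)" "SDerivable \<Gamma> (Some C)" "SDerivable (add_mset B (add_mset C \<Gamma>')) D"
    and bound: "sizes_below M (add_mset (And B C) (\<Gamma> + \<Gamma>')) D"
  shows "SDerivable (\<Gamma> + \<Gamma>') D"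
proof -
  have "SDerivable (\<Gamma> + add_mset C \<Gamma>') D"
    by (rule cut_admissibleD[OF assms(1,3,5)]) (use bound in \<open>auto simp: sizes_below_def\<close>)
  then have "SDerivable (\<Gamma> + (\<Gamma> + \<Gamma>')) D"
    by (intro cut_admissibleD[OF assms(2,4)]) (use bound in \<open>auto simp: sizes_below_def\<close>)
  then show ?thesis by (rule SDerivable_set_mono) auto
qed

lemma cut_imp:
  assumes "cut_admissible M B" "cut_admissible M C"
    and "SDerivable (add_mset B \<Gamma>) (Some C)" "SDerivable (\<Gamma> + \<Gamma>') (Some B)"
      "SDerivable (add_mset C \<Gamma>') D"
    and bound: "sizes_below M (add_mset (Imp B C) (\<Gamma> + \<Gamma>')) D"
  shows "SDerivable (\<Gamma> + \<Gamma>') D"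
proof -
  have "SDerivable (\<Gamma> + \<Gamma>' + \<Gamma>) (Some C)"
    by (rule cut_admissibleD[OF assms(1,4,3)]) (use bound in \<open>auto simp: sizes_below_def\<close>)
  then have "SDerivable (\<Gamma> + \<Gamma>' + \<Gamma> + \<Gamma>') D"
    by (rule cut_admissibleD[OF assms(2) _ assms(5)]) (use bound in \<open>auto simp: sizes_below_def\<close>)
  then show ?thesis by (rule SDerivable_set_mono) auto
qed

lemma cut_box_box:
  fixes \<Gamma> \<Gamma>' :: "'a fm multiset"
  assumes cut: "\<And>B :: 'a fm. cut_admissible M B"
    and left: "cboxes bs1 \<subseteq># \<Gamma>" "\<forall>(\<rho>, \<sigma>) \<in> set bs1. interderivable \<phi> \<rho>"
      "SDerivable (conseqs bs1) (Some \<psi>)"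
    and right: "cboxes bs2 \<subseteq># add_mset (CBox \<phi> \<psi>) \<Gamma>'" "(\<phi>, \<psi>) \<in> set bs2"
      "\<forall>(\<rho>, \<sigma>) \<in> set bs2. interderivable \<phi>2 \<rho>" "SDerivable (conseqs bs2) (Some \<psi>2)"
    and bound: "sizes_below (Suc M) (add_mset (CBox \<phi> \<psi>) (\<Gamma> + \<Gamma>')) (Some (CBox \<phi>2 \<psi>2))"
  shows "SDerivable (\<Gamma> + \<Gamma>') (Some (CBox \<phi>2 \<psi>2))"
proof -
  define bs2' where "bs2' = remove1 (\<phi>, \<psi>) bs2"
  have bs2: "mset bs2 = add_mset (\<phi>, \<psi>) (mset bs2')" "set bs2' \<subseteq> set bs2"
    unfolding bs2'_def using right(2) by (simp_all add: set_remove1_subset)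
  have sub2: "cboxes bs2' \<subseteq># \<Gamma>'" using right(1) by (simp add: bs2(1))
  have "cboxes bs1 \<subseteq># add_mset (CBox \<phi> \<psi>) (\<Gamma> + \<Gamma>')" "cboxes bs2' \<subseteq># add_mset (CBox \<phi> \<psi>) (\<Gamma> + \<Gamma>')"
    using left(1) sub2 by (auto intro: subset_mset.order_trans)
  note sizes1 = sizes_below_cboxes[OF sizes_below_mono[OF bound this(1)]]
    and sizes2 = sizes_below_cboxes[OF sizes_below_mono[OF bound this(2)]]
  have sizes: "size \<phi> < M" "size \<psi> < M" "size \<phi>2 < M" "size \<psi>2 < M"
    using bound by (simp_all add: sizes_below_def)
  have "interderivable \<phi>2 \<phi>" using right(2,3) by auto
  with left(2) have "\<forall>(\<rho>, \<sigma>) \<in> set bs1. interderivable \<phi>2 \<rho>"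
    by (rule interderivable_trans_all[OF _ _ cut]) (use sizes1 sizes in auto)
  then have "\<forall>(\<rho>, \<sigma>) \<in> set (bs1 @ bs2'). interderivable \<phi>2 \<rho>"
    using right(3) bs2(2) by auto
  moreover have "SDerivable (conseqs bs1 + conseqs bs2') (Some \<psi>2)"
    by (rule cut_admissibleD[OF cut left(3)])
      (use right(4) bs2(1) sizes1 sizes2 sizes in \<open>auto simp: sizes_below_def\<close>)
  moreover have "cboxes (bs1 @ bs2') \<subseteq># \<Gamma> + \<Gamma>'"
    using left(1) sub2 by (simp add: subset_mset.add_mono)
  ultimately show ?thesis using SDerivable_box[of "bs1 @ bs2'"] by simp
qed

lemma dia_succedents_size:
  "dia_succedents \<phi> D' D \<Longrightarrow> sizes_below (Suc M) X D \<Longrightarrow> \<forall>\<theta> \<in> set_option D'. size \<theta> < M"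
  unfolding dia_succedents_def sizes_below_def by auto

lemma cut_box_dia:
  fixes \<Gamma> \<Gamma>' :: "'a fm multiset"
  assumes cut: "\<And>B :: 'a fm. cut_admissible M B"
    and left: "cboxes bs1 \<subseteq># \<Gamma>" "\<forall>(\<rho>, \<sigma>) \<in> set bs1. interderivable \<phi> \<rho>"
      "SDerivable (conseqs bs1) (Some \<psi>)"
    and right: "add_mset (CDia \<phi>2 \<psi>2) (cboxes bs2 + cdias ds2) \<subseteq># add_mset (CBox \<phi> \<psi>) \<Gamma>'"
      "(\<phi>, \<psi>) \<in> set bs2" "\<forall>(\<rho>, \<sigma>) \<in> set (bs2 @ ds2). interderivable \<phi>2 \<rho>"
      "SDerivable (add_mset \<psi>2 (conseqs bs2 + conseqs ds2)) D'" "dia_succedents \<phi>2 D' D"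
    and bound: "sizes_below (Suc M) (add_mset (CBox \<phi> \<psi>) (\<Gamma> + \<Gamma>')) D"
  shows "SDerivable (\<Gamma> + \<Gamma>') D"
proof -
  define bs2' where "bs2' = remove1 (\<phi>, \<psi>) bs2"
  have bs2: "mset bs2 = add_mset (\<phi>, \<psi>) (mset bs2')" "set bs2' \<subseteq> set bs2"
    unfolding bs2'_def using right(2) by (simp_all add: set_remove1_subset)
  let ?K2 = "add_mset (CDia \<phi>2 \<psi>2) (cboxes bs2' + cdias ds2)"
  have sub2: "?K2 \<subseteq># \<Gamma>'" using right(1) by (simp add: bs2(1) add_mset_commute)
  have "cboxes bs1 \<subseteq># add_mset (CBox \<phi> \<psi>) (\<Gamma> + \<Gamma>')" "?K2 \<subseteq># add_mset (CBox \<phi> \<psi>) (\<Gamma> + \<Gamma>')"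
    using left(1) sub2 by (auto intro: subset_mset.order_trans)
  note sizes1 = sizes_below_cboxes[OF sizes_below_mono[OF bound this(1)]]
    and sizes2 = sizes_below_dia_principal[OF sizes_below_mono[OF bound this(2)]]
  have sizes: "size \<phi> < M" "size \<psi> < M" "\<forall>\<theta> \<in> set_option D'. size \<theta> < M"
    using bound dia_succedents_size[OF right(5) bound] by (simp_all add: sizes_below_def)
  have "interderivable \<phi>2 \<phi>" using right(2,3) by auto
  with left(2) have "\<forall>(\<rho>, \<sigma>) \<in> set bs1. interderivable \<phi>2 \<rho>"
    by (rule interderivable_trans_all[OF _ _ cut]) (use sizes1 sizes sizes2 in auto)
  then have "\<forall>(\<rho>, \<sigma>) \<in> set ((bs1 @ bs2') @ ds2). interderivable \<phi>2 \<rho>"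
    using right(3) bs2(2) by auto
  moreover have "SDerivable (conseqs bs1 + add_mset \<psi>2 (conseqs bs2' + conseqs ds2)) D'"
  proof (rule cut_admissibleD[OF cut left(3)])
    show "SDerivable (add_mset \<psi> (add_mset \<psi>2 (conseqs bs2' + conseqs ds2))) D'"
      using right(4) by (simp add: bs2(1) add_mset_commute)
    show "sizes_below M (add_mset \<psi> (conseqs bs1 + add_mset \<psi>2 (conseqs bs2' + conseqs ds2))) D'"
      using sizes1 sizes2 sizes unfolding sizes_below_def by auto
  qed
  moreover have "add_mset (CDia \<phi>2 \<psi>2) (cboxes (bs1 @ bs2') + cdias ds2) = cboxes bs1 + ?K2"
    by simp
  with subset_mset.add_mono[OF left(1) sub2]
  have "add_mset (CDia \<phi>2 \<psi>2) (cboxes (bs1 @ bs2') + cdias ds2) \<subseteq># \<Gamma> + \<Gamma>'"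
    by (simp add: add.assoc)
  ultimately show ?thesis
    using right(5) SDerivable_dia_inference[of \<phi>2 \<psi>2 "bs1 @ bs2'" ds2 "\<Gamma> + \<Gamma>'" D' D]
    by (simp add: add.assoc)
qed

lemma dia_succedents_trans:
  assumes "dia_succedents \<eta> D' D" "interderivable \<phi> \<eta>" "cut_admissible M \<eta>"
    "size \<phi> < M" "size \<eta> < M" "sizes_below (Suc M) X D"
  shows "dia_succedents \<phi> D' D"
  using assms interderivable_trans[OF assms(3,2)]
  unfolding dia_succedents_def sizes_below_def by fastforce

lemma cut_dia_principal:
  fixes \<Gamma> \<Gamma>' :: "'a fm multiset"
  assumes cut: "\<And>B :: 'a fm. cut_admissible M B"
    and left: "add_mset (CDia \<phi>1 \<psi>1) (cboxes bs1 + cdias ds1) \<subseteq># \<Gamma>"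
      "\<forall>(\<rho>, \<sigma>) \<in> set (bs1 @ ds1). interderivable \<phi>1 \<rho>"
      "SDerivable (add_mset \<psi>1 (conseqs bs1 + conseqs ds1)) (Some \<theta>)" "interderivable \<phi>1 \<eta>"
    and right: "cboxes bs2 + cdias ds2 \<subseteq># \<Gamma>'" "\<forall>(\<rho>, \<sigma>) \<in> set (bs2 @ ds2). interderivable \<eta> \<rho>"
      "SDerivable (add_mset \<theta> (conseqs bs2 + conseqs ds2)) D'" "dia_succedents \<eta> D' D"
    and bound: "sizes_below (Suc M) (add_mset (CDia \<eta> \<theta>) (\<Gamma> + \<Gamma>')) D"
  shows "SDerivable (\<Gamma> + \<Gamma>') D"
proof -
  have "add_mset (CDia \<phi>1 \<psi>1) (cboxes bs1 + cdias ds1) \<subseteq># add_mset (CDia \<eta> \<theta>) (\<Gamma> + \<Gamma>')"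
    "cboxes bs2 + cdias ds2 \<subseteq># add_mset (CDia \<eta> \<theta>) (\<Gamma> + \<Gamma>')"
    using left(1) right(1) by (auto intro: subset_mset.order_trans)
  note sizes1 = sizes_below_dia_principal[OF sizes_below_mono[OF bound this(1)]]
    and sizes2 = sizes_below_cboxes_cdias[OF sizes_below_mono[OF bound this(2)]]
  have sizes: "size \<eta> < M" "size \<theta> < M" "\<forall>\<theta>' \<in> set_option D'. size \<theta>' < M"
    using bound dia_succedents_size[OF right(4) bound] by (simp_all add: sizes_below_def)
  have "\<forall>(\<rho>, \<sigma>) \<in> set (bs2 @ ds2). interderivable \<phi>1 \<rho>"
    using right(2) left(4) by (rule interderivable_trans_all[OF _ _ cut]) (use sizes1 sizes2 sizes in auto)
  then have "\<forall>(\<rho>, \<sigma>) \<in> set ((bs1 @ bs2) @ (ds1 @ ds2)). interderivable \<phi>1 \<rho>"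
    using left(2) by auto
  moreover have "SDerivable (add_mset \<psi>1 (conseqs bs1 + conseqs ds1) + (conseqs bs2 + conseqs ds2)) D'"
  proof (rule cut_admissibleD[OF cut left(3) right(3)])
    show "sizes_below M (add_mset \<theta> (add_mset \<psi>1 (conseqs bs1 + conseqs ds1) + (conseqs bs2 + conseqs ds2))) D'"
      using sizes1 sizes2 sizes unfolding sizes_below_def by auto
  qed
  moreover have "dia_succedents \<phi>1 D' D"
    by (rule dia_succedents_trans[OF right(4) left(4) cut _ _ bound]) (use sizes1 sizes in auto)
  moreover have "add_mset (CDia \<phi>1 \<psi>1) (cboxes (bs1 @ bs2) + cdias (ds1 @ ds2))
      = add_mset (CDia \<phi>1 \<psi>1) (cboxes bs1 + cdias ds1) + (cboxes bs2 + cdias ds2)"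
    by (simp add: multiset_eq_iff)
  with subset_mset.add_mono[OF left(1) right(1)]
  have "add_mset (CDia \<phi>1 \<psi>1) (cboxes (bs1 @ bs2) + cdias (ds1 @ ds2)) \<subseteq># \<Gamma> + \<Gamma>'" by (simp only:)
  ultimately show ?thesis
    using SDerivable_dia_inference[of \<phi>1 \<psi>1 "bs1 @ bs2" "ds1 @ ds2" "\<Gamma> + \<Gamma>'" D' D]
    by (simp add: add.assoc add.left_commute)
qed

(*
  The one principal case that cuts on a formula which is not a subformula of the cut formula,
  namely on phi1 when composing equivalences; hence the bound M in the induction.
*)
lemma cut_dia_side:
  fixes \<Gamma> \<Gamma>' :: "'a fm multiset"
  assumes cut: "\<And>B :: 'a fm. cut_admissible M B"
    and left: "add_mset (CDia \<phi>1 \<psi>1) (cboxes bs1 + cdias ds1) \<subseteq># \<Gamma>"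
      "\<forall>(\<rho>, \<sigma>) \<in> set (bs1 @ ds1). interderivable \<phi>1 \<rho>"
      "SDerivable (add_mset \<psi>1 (conseqs bs1 + conseqs ds1)) (Some \<theta>)" "interderivable \<phi>1 \<eta>"
    and right: "add_mset (CDia \<phi>2 \<psi>2) (cboxes bs2 + cdias ds2) \<subseteq># add_mset (CDia \<eta> \<theta>) \<Gamma>'"
      "(\<eta>, \<theta>) \<in> set ds2" "\<forall>(\<rho>, \<sigma>) \<in> set (bs2 @ ds2). interderivable \<phi>2 \<rho>"
      "SDerivable (add_mset \<psi>2 (conseqs bs2 + conseqs ds2)) D'" "dia_succedents \<phi>2 D' D"
    and bound: "sizes_below (Suc M) (add_mset (CDia \<eta> \<theta>) (\<Gamma> + \<Gamma>')) D"
  shows "SDerivable (\<Gamma> + \<Gamma>') D"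
proof -
  define ds2' where "ds2' = remove1 (\<eta>, \<theta>) ds2"
  have ds2: "mset ds2 = add_mset (\<eta>, \<theta>) (mset ds2')" "set ds2' \<subseteq> set ds2"
    unfolding ds2'_def using right(2) by (simp_all add: set_remove1_subset)
  let ?K1 = "add_mset (CDia \<phi>1 \<psi>1) (cboxes bs1 + cdias ds1)"
    and ?K2 = "add_mset (CDia \<phi>2 \<psi>2) (cboxes bs2 + cdias ds2')"
  have sub2: "?K2 \<subseteq># \<Gamma>'" using right(1) by (simp add: ds2(1) add_mset_commute)
  have "?K1 \<subseteq># add_mset (CDia \<eta> \<theta>) (\<Gamma> + \<Gamma>')" "?K2 \<subseteq># add_mset (CDia \<eta> \<theta>) (\<Gamma> + \<Gamma>')"
    using left(1) sub2 by (auto intro: subset_mset.order_trans)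
  note sizes1 = sizes_below_dia_principal[OF sizes_below_mono[OF bound this(1)]]
    and sizes2 = sizes_below_dia_principal[OF sizes_below_mono[OF bound this(2)]]
  have sizes: "size \<eta> < M" "size \<theta> < M" "\<forall>\<theta>' \<in> set_option D'. size \<theta>' < M"
    using bound dia_succedents_size[OF right(5) bound] by (simp_all add: sizes_below_def)
  have "interderivable \<phi>2 \<eta>" using right(2,3) by auto
  then have "interderivable \<phi>2 \<phi>1"
    using interderivable_trans[OF cut _ interderivable_sym[OF left(4)]] sizes1 sizes2 sizes by blast
  moreover have "\<forall>(\<rho>, \<sigma>) \<in> set (bs1 @ ds1). interderivable \<phi>2 \<rho>"
    using left(2) calculation by (rule interderivable_trans_all[OF _ _ cut]) (use sizes1 sizes2 in auto)
  ultimately have "\<forall>(\<rho>, \<sigma>) \<in> set ((bs1 @ bs2) @ ((\<phi>1, \<psi>1) # ds1 @ ds2')). interderivable \<phi>2 \<rho>"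
    using right(3) ds2(2) by auto
  moreover have "SDerivable (add_mset \<psi>1 (conseqs bs1 + conseqs ds1) + add_mset \<psi>2 (conseqs bs2 + conseqs ds2')) D'"
  proof (rule cut_admissibleD[OF cut left(3)])
    show "SDerivable (add_mset \<theta> (add_mset \<psi>2 (conseqs bs2 + conseqs ds2'))) D'"
      using right(4) by (simp add: ds2(1) add_mset_commute)
    show "sizes_below M (add_mset \<theta> (add_mset \<psi>1 (conseqs bs1 + conseqs ds1)
        + add_mset \<psi>2 (conseqs bs2 + conseqs ds2'))) D'"
      using sizes1 sizes2 sizes unfolding sizes_below_def by auto
  qed
  moreover have "add_mset (CDia \<phi>2 \<psi>2) (cboxes (bs1 @ bs2) + cdias ((\<phi>1, \<psi>1) # ds1 @ ds2')) = ?K1 + ?K2"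
    by (simp add: multiset_eq_iff)
  with subset_mset.add_mono[OF left(1) sub2]
  have "add_mset (CDia \<phi>2 \<psi>2) (cboxes (bs1 @ bs2) + cdias ((\<phi>1, \<psi>1) # ds1 @ ds2')) \<subseteq># \<Gamma> + \<Gamma>'"
    by (simp only:)
  ultimately show ?thesis
    using right(5) SDerivable_dia_inference[of \<phi>2 \<psi>2 "bs1 @ bs2" "(\<phi>1, \<psi>1) # ds1 @ ds2'" "\<Gamma> + \<Gamma>'" D' D]
    by (simp add: add.assoc add.left_commute add_mset_commute)
qed

lemma cut_left_analysis:
  fixes \<Gamma> \<Gamma>' :: "'a fm multiset"
  assumes L: "SD n1 \<Gamma> (Some A)" and R: "SD n2 (add_mset A \<Gamma>') D"
    and lower: "\<forall>\<Gamma>0. \<forall>m < n1. SD m \<Gamma>0 (Some A)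
      \<longrightarrow> sizes_below (Suc M) (add_mset A (\<Gamma>0 + \<Gamma>')) D \<longrightarrow> SDerivable (\<Gamma>0 + \<Gamma>') D"
    and bound: "sizes_below (Suc M) (add_mset A (\<Gamma> + \<Gamma>')) D"
  obtains "SDerivable (\<Gamma> + \<Gamma>') D"
  | (andR) B C where "A = And B C" "SDerivable \<Gamma> (Some B)" "SDerivable \<Gamma> (Some C)"
  | (orR) B C B' where "A = Or B C" "B' = B \<or> B' = C" "SDerivable \<Gamma> (Some B')"
  | (impR) B C where "A = Imp B C" "SDerivable (add_mset B \<Gamma>) (Some C)"
  | (box) \<phi> \<psi> bs where "A = CBox \<phi> \<psi>" "cboxes bs \<subseteq># \<Gamma>"
      "\<forall>(\<rho>, \<sigma>) \<in> set bs. interderivable \<phi> \<rho>" "SDerivable (conseqs bs) (Some \<psi>)"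
  | (dia) \<phi> \<psi> bs ds \<eta> \<theta> where "A = CDia \<eta> \<theta>" "add_mset (CDia \<phi> \<psi>) (cboxes bs + cdias ds) \<subseteq># \<Gamma>"
      "\<forall>(\<rho>, \<sigma>) \<in> set (bs @ ds). interderivable \<phi> \<rho>"
      "SDerivable (add_mset \<psi> (conseqs bs + conseqs ds)) (Some \<theta>)" "interderivable \<phi> \<eta>"
proof -
  have cut_lower: "SDerivable (\<Gamma>0 + \<Gamma>') D"
    if "m < n1" "SD m \<Gamma>0 (Some A)" "sizes_below (Suc M) (add_mset A (\<Gamma>0 + \<Gamma>')) D" for m \<Gamma>0
    using lower that by blast
  from L show thesis
  proof (cases rule: SD_cases)
    case (init p \<Gamma>0)
    then have "add_mset A \<Gamma>' \<subseteq># \<Gamma> + \<Gamma>'" by simp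
    then show thesis using that(1) SD_weaken[OF R] SDerivableI by blast
  next
    case botL
    then show thesis using that(1) SDerivable_botL[of "\<Gamma> + \<Gamma>'"] by simp
  next
    case (andL m B C \<Gamma>0)
    then have "SDerivable (add_mset B (add_mset C \<Gamma>0) + \<Gamma>') D"
      using bound by (intro cut_lower) (auto simp: sizes_below_def)
    then show thesis using that(1) andL(2) by (simp add: SDerivable_andL)
  next
    case (orL m B C \<Gamma>0)
    then have "SDerivable (add_mset B \<Gamma>0 + \<Gamma>') D" "SDerivable (add_mset C \<Gamma>0 + \<Gamma>') D"
      using bound by (intro cut_lower; auto simp: sizes_below_def)+
    then show thesis using that(1) orL(2) by (simp add: SDerivable_orL)
  next
    case (impL m B C \<Gamma>0)
    then have "SDerivable (add_mset C \<Gamma>0 + \<Gamma>') D"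
      using bound by (intro cut_lower) (auto simp: sizes_below_def)
    moreover have "SDerivable (add_mset (Imp B C) (\<Gamma>0 + \<Gamma>')) (Some B)"
      using SDerivableI[OF impL(3)] by (rule SDerivable_weaken) simp
    ultimately show thesis using that(1) impL(2) by (simp add: SDerivable_impL)
  next
    case (andR m B C)
    then show thesis using that(2) SDerivableI by blast
  next
    case (orR1 m B C)
    then show thesis using that(3) SDerivableI by blast
  next
    case (orR2 m B C)
    then show thesis using that(3) SDerivableI by blast
  next
    case (impR m B C)
    then show thesis using that(4) SDerivableI by blast
  next
    case (box m)
    then show thesis using that(5) by (auto elim: box_inference_SDerivableE)
  next
    case (dia m)
    then obtain \<phi> \<psi> bs ds D' where sub: "add_mset (CDia \<phi> \<psi>) (cboxes bs + cdias ds) \<subseteq># \<Gamma>"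
      and eqv: "\<forall>(\<rho>, \<sigma>) \<in> set (bs @ ds). interderivable \<phi> \<rho>"
      and prem: "SDerivable (add_mset \<psi> (conseqs bs + conseqs ds)) D'" and succ: "dia_succedents \<phi> D' (Some A)"
      by (auto elim: dia_inference_SDerivableE)
    show thesis
    proof (cases D')
      case None
      have "add_mset (CDia \<phi> \<psi>) (cboxes bs + cdias ds) \<subseteq># \<Gamma> + \<Gamma>'"
        using sub by (auto intro: subset_mset.order_trans)
      then show thesis using that(1) SDerivable_boxdia eqv prem None by blast
    next
      case (Some \<theta>)
      then show thesis using that(6) sub eqv prem succ by (auto simp: dia_succedents_def)
    qed
  qed
qed

lemma cut_right_analysis:
  fixes \<Gamma> \<Gamma>' :: "'a fm multiset"
  assumes L: "SD n1 \<Gamma> (Some A)" and R: "SD n2 (add_mset A \<Gamma>') D"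
    and lower: "\<forall>\<Gamma>0' D0. \<forall>m < n2. SD m (add_mset A \<Gamma>0') D0
      \<longrightarrow> sizes_below (Suc M) (add_mset A (\<Gamma> + \<Gamma>0')) D0 \<longrightarrow> SDerivable (\<Gamma> + \<Gamma>0') D0"
    and bound: "sizes_below (Suc M) (add_mset A (\<Gamma> + \<Gamma>')) D"
  obtains "SDerivable (\<Gamma> + \<Gamma>') D"
  | (botL) "A = Bot"
  | (andL) B C where "A = And B C" "SDerivable (add_mset B (add_mset C \<Gamma>')) D"
  | (orL) B C where "A = Or B C" "SDerivable (add_mset B \<Gamma>') D" "SDerivable (add_mset C \<Gamma>') D"
  | (impL) B C where "A = Imp B C" "SDerivable (\<Gamma> + \<Gamma>') (Some B)" "SDerivable (add_mset C \<Gamma>') D"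
  | (box) m where "box_inference m (add_mset A \<Gamma>') D"
  | (dia) m where "dia_inference m (add_mset A \<Gamma>') D"
proof -
  have cut_lower: "SDerivable (\<Gamma> + \<Gamma>0') D0"
    if "m < n2" "SD m (add_mset A \<Gamma>0') D0" "sizes_below (Suc M) (add_mset A (\<Gamma> + \<Gamma>0')) D0"
    for m \<Gamma>0' D0
    using lower that by blast
  from R show thesis
  proof (cases rule: SD_cases)
    case (init p \<Gamma>0)
    show thesis
    proof (cases "A = Atom p")
      case True
      then show thesis using that(1) init(2) SDerivableI[OF SD_weaken[OF L]] by simp
    next
      case False
      have "Atom p \<in># \<Gamma> + \<Gamma>'" using insert_noteq_member[OF init(1) False] by simp
      then have "SDerivable (\<Gamma> + \<Gamma>') (Some (Atom p))" by (rule SDerivable_init)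
      with that(1) init(2) show thesis by simp
    qed
  next
    case botL
    then show thesis using that(1,2) SDerivable_botL[of "\<Gamma> + \<Gamma>'"] by auto
  next
    case (andL m B C \<Gamma>0)
    from andL(2) show thesis
    proof (cases rule: add_mset_eq_add_mset_cases)
      case 1
      then show thesis using that(3) andL(3) SDerivableI by blast
    next
      case (2 K)
      then have "SDerivable (\<Gamma> + add_mset B (add_mset C K)) D"
        using andL bound by (intro cut_lower) (auto simp: add_mset_commute sizes_below_def)
      then show thesis using that(1) 2 by (simp add: SDerivable_andL)
    qed
  next
    case (orL m B C \<Gamma>0)
    from orL(2) show thesis
    proof (cases rule: add_mset_eq_add_mset_cases)
      case 1
      then show thesis using that(4) orL(3,4) SDerivableI by blast
    next
      case (2 K)
      then have "SDerivable (\<Gamma> + add_mset B K) D" "SDerivable (\<Gamma> + add_mset C K) D"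
        using orL bound by (intro cut_lower; auto simp: add_mset_commute sizes_below_def)+
      then show thesis using that(1) 2 by (simp add: SDerivable_orL)
    qed
  next
    case (impL m B C \<Gamma>0)
    from impL(2) show thesis
    proof (cases rule: add_mset_eq_add_mset_cases)
      case 1
      then have "SDerivable (\<Gamma> + \<Gamma>') (Some B)"
        using impL bound by (intro cut_lower) (auto simp: sizes_below_def)
      then show thesis using that(5) 1 impL(4) SDerivableI by blast
    next
      case (2 K)
      then have "SDerivable (\<Gamma> + add_mset (Imp B C) K) (Some B)" "SDerivable (\<Gamma> + add_mset C K) D"
        using impL bound by (intro cut_lower; auto simp: add_mset_commute sizes_below_def)+
      then show thesis using that(1) 2 by (simp add: SDerivable_impL)
    qed
  next
    case (andR m B C)
    then have "SDerivable (\<Gamma> + \<Gamma>') (Some B)" "SDerivable (\<Gamma> + \<Gamma>') (Some C)"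
      using bound by (intro cut_lower; auto simp: sizes_below_def)+
    then show thesis using that(1) andR(2) by (simp add: SDerivable_andR)
  next
    case (orR1 m B C)
    then have "SDerivable (\<Gamma> + \<Gamma>') (Some B)"
      using bound by (intro cut_lower) (auto simp: sizes_below_def)
    then show thesis using that(1) orR1(2) by (simp add: SDerivable_orR1)
  next
    case (orR2 m B C)
    then have "SDerivable (\<Gamma> + \<Gamma>') (Some C)"
      using bound by (intro cut_lower) (auto simp: sizes_below_def)
    then show thesis using that(1) orR2(2) by (simp add: SDerivable_orR2)
  next
    case (impR m B C)
    then have "SDerivable (\<Gamma> + add_mset B \<Gamma>') (Some C)"
      using bound by (intro cut_lower) (auto simp: add_mset_commute sizes_below_def)
    then show thesis using that(1) impR(2) by (simp add: SDerivable_impR)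
  next
    case (box m)
    then show thesis using that(6) by blast
  next
    case (dia m)
    then show thesis using that(7) by blast
  qed
qed

lemma cut_step:
  fixes \<Gamma> \<Gamma>' :: "'a fm multiset"
  assumes cut_M: "\<And>B :: 'a fm. cut_admissible M B"
    and cut_sub: "\<And>B :: 'a fm. size B < size A \<Longrightarrow> cut_admissible (Suc M) B"
    and cut_lower: "\<And>\<Gamma>0 \<Gamma>0' D0 m1 m2. m1 + m2 < n1 + n2 \<Longrightarrow> SD m1 \<Gamma>0 (Some A)
      \<Longrightarrow> SD m2 (add_mset A \<Gamma>0') D0 \<Longrightarrow> sizes_below (Suc M) (add_mset A (\<Gamma>0 + \<Gamma>0')) D0
      \<Longrightarrow> SDerivable (\<Gamma>0 + \<Gamma>0') D0"
    and L: "SD n1 \<Gamma> (Some A)" and R: "SD n2 (add_mset A \<Gamma>') D"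
    and bound: "sizes_below (Suc M) (add_mset A (\<Gamma> + \<Gamma>')) D"
  shows "SDerivable (\<Gamma> + \<Gamma>') D"
proof -
  have lower_left: "\<forall>\<Gamma>0. \<forall>m < n1. SD m \<Gamma>0 (Some A)
      \<longrightarrow> sizes_below (Suc M) (add_mset A (\<Gamma>0 + \<Gamma>')) D \<longrightarrow> SDerivable (\<Gamma>0 + \<Gamma>') D"
    using cut_lower[OF _ _ R] by simp
  have lower_right: "\<forall>\<Gamma>0' D0. \<forall>m < n2. SD m (add_mset A \<Gamma>0') D0
      \<longrightarrow> sizes_below (Suc M) (add_mset A (\<Gamma> + \<Gamma>0')) D0 \<longrightarrow> SDerivable (\<Gamma> + \<Gamma>0') D0"
    using cut_lower[OF _ L] by simp
  note left = cut_left_analysis[OF L R lower_left bound]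
  show ?thesis
  proof (cases rule: cut_right_analysis[OF L R lower_right bound,
        case_names direct botL andL orL impL box dia])
    case direct
    then show ?thesis .
  next
    case botL
    show ?thesis by (rule left) (use botL in simp_all)
  next
    case (andL B C)
    show ?thesis
    proof (rule left)
      fix B' C' assume "A = And B' C'" "SDerivable \<Gamma> (Some B')" "SDerivable \<Gamma> (Some C')"
      then show ?thesis using cut_and[OF cut_sub cut_sub, of B' C' \<Gamma> \<Gamma>' D] andL bound by simp
    qed (use andL in simp_all)
  next
    case (orL B C)
    show ?thesis
    proof (rule left)
      fix B' C' B'' assume A: "A = Or B' C'" and B'': "B'' = B' \<or> B'' = C'"
        and left_prem: "SDerivable \<Gamma> (Some B'')"
      have "size B'' < size A" "SDerivable (add_mset B'' \<Gamma>') D" using A B'' orL by auto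
      then show ?thesis using left_prem
        by (intro cut_admissibleD[OF cut_sub]) (use bound A B'' in \<open>auto simp: sizes_below_def\<close>)
    qed (use orL in simp_all)
  next
    case (impL B C)
    show ?thesis
    proof (rule left)
      fix B' C' assume "A = Imp B' C'" "SDerivable (add_mset B' \<Gamma>) (Some C')"
      then show ?thesis using cut_imp[OF cut_sub cut_sub, of B' C' \<Gamma> \<Gamma>' D] impL bound by simp
    qed (use impL in simp_all)
  next
    case (box k)
    then show ?thesis
    proof (cases rule: box_inference_add_mset_cases[where \<Gamma> = \<Gamma>])
      case (2 \<phi> \<psi> \<phi>2 \<psi>2 bs2)
      show ?thesis
      proof (rule left)
        fix \<phi>' \<psi>' bs1 assume "A = CBox \<phi>' \<psi>'" "cboxes bs1 \<subseteq># \<Gamma>"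
          "\<forall>(\<rho>, \<sigma>) \<in> set bs1. interderivable \<phi>' \<rho>" "SDerivable (conseqs bs1) (Some \<psi>')"
        then show ?thesis using cut_box_box[OF cut_M] 2 bound by simp
      qed (use 2 in simp_all)
    qed
  next
    case (dia k)
    then show ?thesis
    proof (cases rule: dia_inference_add_mset_cases[where \<Gamma> = \<Gamma>])
      case (box \<phi> \<psi> \<phi>2 \<psi>2 bs2 ds2 D')
      show ?thesis
      proof (rule left)
        fix \<phi>' \<psi>' bs1 assume "A = CBox \<phi>' \<psi>'" "cboxes bs1 \<subseteq># \<Gamma>"
          "\<forall>(\<rho>, \<sigma>) \<in> set bs1. interderivable \<phi>' \<rho>" "SDerivable (conseqs bs1) (Some \<psi>')"
        then show ?thesis using cut_box_dia[OF cut_M] box bound by simp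
      qed (use box in simp_all)
    next
      case (principal \<eta> \<theta> bs2 ds2 D')
      show ?thesis
      proof (rule left)
        fix \<phi>1 \<psi>1 bs1 ds1 \<eta>' \<theta>' assume "A = CDia \<eta>' \<theta>'"
          "add_mset (CDia \<phi>1 \<psi>1) (cboxes bs1 + cdias ds1) \<subseteq># \<Gamma>"
          "\<forall>(\<rho>, \<sigma>) \<in> set (bs1 @ ds1). interderivable \<phi>1 \<rho>"
          "SDerivable (add_mset \<psi>1 (conseqs bs1 + conseqs ds1)) (Some \<theta>')" "interderivable \<phi>1 \<eta>'"
        then show ?thesis using cut_dia_principal[OF cut_M] principal bound by simp
      qed (use principal in simp_all)
    next
      case (side \<eta> \<theta> \<phi>2 \<psi>2 bs2 ds2 D')
      show ?thesis
      proof (rule left)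
        fix \<phi>1 \<psi>1 bs1 ds1 \<eta>' \<theta>' assume "A = CDia \<eta>' \<theta>'"
          "add_mset (CDia \<phi>1 \<psi>1) (cboxes bs1 + cdias ds1) \<subseteq># \<Gamma>"
          "\<forall>(\<rho>, \<sigma>) \<in> set (bs1 @ ds1). interderivable \<phi>1 \<rho>"
          "SDerivable (add_mset \<psi>1 (conseqs bs1 + conseqs ds1)) (Some \<theta>')" "interderivable \<phi>1 \<eta>'"
        then show ?thesis using cut_dia_side[OF cut_M] side bound by simp
      qed (use side in simp_all)
    qed
  qed
qed

lemma cut_admissible_step:
  fixes A :: "'a fm"
  assumes cut_M: "\<And>B :: 'a fm. cut_admissible M B"
    and cut_sub: "\<And>B :: 'a fm. size B < size A \<Longrightarrow> cut_admissible (Suc M) B"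
  shows "cut_admissible (Suc M) A"
proof -
  have "SDerivable (\<Gamma> + \<Gamma>') D"
    if "SD n1 \<Gamma> (Some A)" "SD n2 (add_mset A \<Gamma>') D" "sizes_below (Suc M) (add_mset A (\<Gamma> + \<Gamma>')) D"
    for n1 n2 \<Gamma> \<Gamma>' D
    using that
  proof (induction "n1 + n2" arbitrary: n1 n2 \<Gamma> \<Gamma>' D rule: less_induct)
    case less
    show ?case by (rule cut_step[OF cut_M cut_sub less.hyps less.prems]) simp_all
  qed
  then show ?thesis unfolding cut_admissible_def SDerivable_def by blast
qed

lemma cut_admissible_all: "cut_admissible M A"
proof (induction M arbitrary: A)
  case 0
  show ?case by (auto simp: cut_admissible_def sizes_below_def)
next
  case (Suc M)
  show ?case
  proof (induction A rule: measure_induct_rule[of size])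
    case (less A)
    show ?case by (rule cut_admissible_step[OF Suc.IH less.IH])
  qed
qed

lemma sizes_below_exists: "\<exists>M. sizes_below M X D"
  using finite_nat_set_iff_bounded[of "size ` (set_mset X \<union> set_option D)"]
  unfolding sizes_below_def by auto

theorem SDerivable_cut:
  "SDerivable \<Gamma> (Some A) \<Longrightarrow> SDerivable (add_mset A \<Gamma>') D \<Longrightarrow> SDerivable (\<Gamma> + \<Gamma>') D"
  using sizes_below_exists[of "add_mset A (\<Gamma> + \<Gamma>')" D] cut_admissible_all cut_admissibleD by blast

section \<open>Soundness\<close>

(*
  Hypotheses may only be used through modus ponens; the rules RA and RC stay confined to
  theorems, so the deduction theorem holds.
*)
inductive derivable_from :: "'a fm set \<Rightarrow> 'a fm \<Rightarrow> bool" (infix "\<turnstile>" 55) for H where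
  hyp: "\<phi> \<in> H \<Longrightarrow> H \<turnstile> \<phi>"
| ax: "ConstCKCEM \<phi> \<Longrightarrow> H \<turnstile> \<phi>"
| mp: "H \<turnstile> Imp \<phi> \<psi> \<Longrightarrow> H \<turnstile> \<phi> \<Longrightarrow> H \<turnstile> \<psi>"

lemma derivable_from_mono: "H \<turnstile> \<phi> \<Longrightarrow> H \<subseteq> H' \<Longrightarrow> H' \<turnstile> \<phi>"
  by (induction rule: derivable_from.induct) (auto intro: derivable_from.intros)

lemma derivable_from_trans: "H \<turnstile> \<phi> \<Longrightarrow> (\<And>\<chi>. \<chi> \<in> H \<Longrightarrow> H' \<turnstile> \<chi>) \<Longrightarrow> H' \<turnstile> \<phi>"
  by (induction rule: derivable_from.induct) (auto intro: derivable_from.intros)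

lemma derivable_from_empty: "{} \<turnstile> \<phi> \<Longrightarrow> ConstCKCEM \<phi>"
  by (induction rule: derivable_from.induct) (auto intro: MP)

lemma ConstCKCEM_imp_refl: "ConstCKCEM (Imp \<phi> \<phi>)"
  by (meson A1 A2 MP)

lemma derivable_from_deduction: "insert \<phi> H \<turnstile> \<psi> \<Longrightarrow> H \<turnstile> Imp \<phi> \<psi>"
proof (induction rule: derivable_from.induct)
  case (hyp \<psi>)
  then show ?case
    using ConstCKCEM_imp_refl by (metis A1 ax derivable_from.hyp insertE mp)
next
  case (ax \<psi>)
  then show ?case by (meson A1 derivable_from.ax mp)
next
  case (mp \<psi> \<chi>)
  then show ?case by (meson A2 derivable_from.ax derivable_from.mp)
qed

lemma derivable_from_axiom: "ConstCKCEM (Imp \<phi> \<psi>) \<Longrightarrow> H \<turnstile> \<phi> \<Longrightarrow> H \<turnstile> \<psi>"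
  by (meson ax mp)

lemma derivable_from_axiom2: "ConstCKCEM (Imp \<phi> (Imp \<psi> \<chi>)) \<Longrightarrow> H \<turnstile> \<phi> \<Longrightarrow> H \<turnstile> \<psi> \<Longrightarrow> H \<turnstile> \<chi>"
  by (meson ax mp)

lemma derivable_from_andI: "H \<turnstile> \<phi> \<Longrightarrow> H \<turnstile> \<psi> \<Longrightarrow> H \<turnstile> And \<phi> \<psi>"
  by (rule derivable_from_axiom2[OF A5])

lemma derivable_from_andD1: "H \<turnstile> And \<phi> \<psi> \<Longrightarrow> H \<turnstile> \<phi>"
  by (rule derivable_from_axiom[OF A3])

lemma derivable_from_andD2: "H \<turnstile> And \<phi> \<psi> \<Longrightarrow> H \<turnstile> \<psi>"
  by (rule derivable_from_axiom[OF A4])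

lemma derivable_from_cut: "H \<turnstile> \<phi> \<Longrightarrow> insert \<phi> H \<turnstile> \<psi> \<Longrightarrow> H \<turnstile> \<psi>"
  by (meson derivable_from_deduction mp)

lemma derivable_from_orE: "H \<turnstile> Or \<phi> \<psi> \<Longrightarrow> insert \<phi> H \<turnstile> \<chi> \<Longrightarrow> insert \<psi> H \<turnstile> \<chi> \<Longrightarrow> H \<turnstile> \<chi>"
  by (meson A8 derivable_from_axiom2 derivable_from_deduction mp)

lemma ConstCKCEM_IffI: "{\<phi>} \<turnstile> \<psi> \<Longrightarrow> {\<psi>} \<turnstile> \<phi> \<Longrightarrow> ConstCKCEM (Iff \<phi> \<psi>)"
  unfolding Iff_def by (intro derivable_from_empty derivable_from_andI derivable_from_deduction) simp_all

lemma derivable_from_iffD1: "ConstCKCEM (Iff \<phi> \<psi>) \<Longrightarrow> H \<turnstile> \<phi> \<Longrightarrow> H \<turnstile> \<psi>"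
  unfolding Iff_def by (meson ax derivable_from_andD1 mp)

lemma derivable_from_Top: "H \<turnstile> Top"
  unfolding Top_def Neg_def by (rule derivable_from_deduction) (simp add: hyp)

lemma derivable_from_box_mono:
  assumes "{\<phi>} \<turnstile> \<psi>"
  shows "{CBox \<chi> \<phi>} \<turnstile> CBox \<chi> \<psi>"
proof -
  have "ConstCKCEM (Iff \<phi> (And \<phi> \<psi>))"
    using assms by (intro ConstCKCEM_IffI derivable_from_andI) (auto intro: hyp derivable_from_andD1)
  then have "{CBox \<chi> \<phi>} \<turnstile> CBox \<chi> (And \<phi> \<psi>)"
    by (rule derivable_from_iffD1[OF RC_Box]) (simp add: hyp)
  then show ?thesis by (rule derivable_from_andD2[OF derivable_from_axiom[OF CM_Box]])
qed

lemma derivable_from_box_rule: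
  assumes "snd ` set bs \<turnstile> \<psi>" "\<forall>(\<rho>, \<sigma>) \<in> set bs. ConstCKCEM (Iff \<rho> \<phi>)"
  shows "(\<lambda>(\<rho>, \<sigma>). CBox \<rho> \<sigma>) ` set bs \<turnstile> CBox \<phi> \<psi>"
  using assms
proof (induction bs arbitrary: \<psi>)
  case Nil
  then have "{} \<turnstile> \<psi>" by simp
  then have "ConstCKCEM (Iff Top \<psi>)"
    by (intro ConstCKCEM_IffI derivable_from_Top) (erule derivable_from_mono, simp)
  then have "{} \<turnstile> CBox \<phi> \<psi>" by (rule derivable_from_iffD1[OF RC_Box]) (rule ax[OF CN_Box])
  then show ?case by simp
next
  case (Cons p bs)
  obtain \<rho> \<sigma> where p: "p = (\<rho>, \<sigma>)" by fastforce
  let ?H = "(\<lambda>(\<rho>, \<sigma>). CBox \<rho> \<sigma>) ` set bs" and ?H' = "insert (CBox \<rho> \<sigma>) ((\<lambda>(\<rho>, \<sigma>). CBox \<rho> \<sigma>) ` set bs)"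
  have "snd ` set bs \<turnstile> Imp \<sigma> \<psi>"
    using Cons.prems(1) p by (intro derivable_from_deduction) simp
  then have "?H \<turnstile> CBox \<phi> (Imp \<sigma> \<psi>)" using Cons.IH Cons.prems(2) by simp
  then have 1: "?H' \<turnstile> CBox \<phi> (Imp \<sigma> \<psi>)" by (rule derivable_from_mono) auto
  have 2: "?H' \<turnstile> CBox \<phi> \<sigma>"
    using Cons.prems(2) p by (intro derivable_from_iffD1[OF RA_Box, of \<rho> \<phi>]) (auto intro: hyp)
  have 3: "?H' \<turnstile> CBox \<phi> (And \<sigma> (Imp \<sigma> \<psi>))"
    by (rule derivable_from_axiom[OF CC_Box derivable_from_andI[OF 2 1]])
  have "{And \<sigma> (Imp \<sigma> \<psi>)} \<turnstile> \<psi>"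
    by (rule mp[of _ \<sigma>]) (auto intro: hyp derivable_from_andD1 derivable_from_andD2)
  then have "{CBox \<phi> (And \<sigma> (Imp \<sigma> \<psi>))} \<turnstile> CBox \<phi> \<psi>" by (rule derivable_from_box_mono)
  then have "?H' \<turnstile> CBox \<phi> \<psi>" by (rule derivable_from_trans) (use 3 in simp)
  then show ?case using p by simp
qed

(* The side diamonds are merged into the principal one with CEM, then CK applies the boxes. *)
lemma derivable_from_dia_rule:
  assumes "insert \<psi> (snd ` set bs \<union> snd ` set ds) \<turnstile> \<theta>"
    "\<forall>(\<rho>, \<sigma>) \<in> set (bs @ ds). ConstCKCEM (Iff \<rho> \<phi>)"
  shows "insert (CDia \<phi> \<psi>) ((\<lambda>(\<rho>, \<sigma>). CBox \<rho> \<sigma>) ` set bs \<union> (\<lambda>(\<rho>, \<sigma>). CDia \<rho> \<sigma>) ` set ds)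
    \<turnstile> CDia \<phi> \<theta>"
  using assms
proof (induction ds arbitrary: \<psi>)
  case Nil
  let ?B = "(\<lambda>(\<rho>, \<sigma>). CBox \<rho> \<sigma>) ` set bs"
  have "snd ` set bs \<turnstile> Imp \<psi> \<theta>" using Nil.prems(1) by (intro derivable_from_deduction) simp
  then have "?B \<turnstile> CBox \<phi> (Imp \<psi> \<theta>)" using Nil.prems(2) by (intro derivable_from_box_rule) simp_all
  then have "insert (CDia \<phi> \<psi>) ?B \<turnstile> CBox \<phi> (Imp \<psi> \<theta>)" by (rule derivable_from_mono) auto
  from derivable_from_axiom2[OF CK_Dia this] show ?case by (simp add: hyp)
next
  case (Cons p ds)
  obtain \<xi> \<chi> where p: "p = (\<xi>, \<chi>)" by fastforce
  let ?B = "(\<lambda>(\<rho>, \<sigma>). CBox \<rho> \<sigma>) ` set bs" and ?D = "(\<lambda>(\<rho>, \<sigma>). CDia \<rho> \<sigma>) ` set ds"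
  let ?H = "insert (CDia \<phi> \<psi>) (?B \<union> insert (CDia \<xi> \<chi>) ?D)"
  have "insert (And \<psi> \<chi>) (snd ` set bs \<union> snd ` set ds) \<turnstile> \<theta>"
    by (rule derivable_from_trans[OF Cons.prems(1)])
      (use p in \<open>auto intro: hyp derivable_from_andD1[of _ _ \<chi>] derivable_from_andD2[of _ \<psi>]\<close>)
  then have IH: "insert (CDia \<phi> (And \<psi> \<chi>)) (?B \<union> ?D) \<turnstile> CDia \<phi> \<theta>"
    using Cons.IH Cons.prems(2) by simp
  have "?H \<turnstile> CDia \<phi> \<chi>"
    using Cons.prems(2) p by (intro derivable_from_iffD1[OF RA_Dia, of \<xi> \<phi>]) (auto intro: hyp)
  then have "?H \<turnstile> CDia \<phi> (And \<psi> \<chi>)"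
    by (intro derivable_from_axiom[OF CEM_Dia] derivable_from_andI) (auto intro: hyp)
  moreover have "insert (CDia \<phi> (And \<psi> \<chi>)) ?H \<turnstile> CDia \<phi> \<theta>" by (rule derivable_from_mono[OF IH]) auto
  ultimately have "?H \<turnstile> CDia \<phi> \<theta>" by (rule derivable_from_cut)
  then show ?case using p by simp
qed

lemma SD_sound: "SD n X D \<Longrightarrow> set_mset X \<turnstile> big_or D"
proof (induction rule: SD.induct)
  case (init n p \<Gamma>)
  show ?case by (simp add: hyp)
next
  case (botL n \<Gamma> \<Delta>)
  show ?case by (rule derivable_from_axiom[OF A9]) (simp add: hyp)
next
  case (andL n \<phi> \<psi> \<Gamma> \<Delta>)
  let ?H = "insert (And \<phi> \<psi>) (set_mset \<Gamma>)"
  have "?H \<turnstile> \<phi>" "?H \<turnstile> \<psi>"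
    by (rule derivable_from_andD1[of _ \<phi> \<psi>, OF hyp], simp)
      (rule derivable_from_andD2[of _ \<phi> \<psi>, OF hyp], simp)
  then have "?H \<turnstile> big_or \<Delta>" by (intro derivable_from_trans[OF andL.IH]) (auto intro: hyp)
  then show ?case by simp
next
  case (andR n \<Gamma> \<phi> \<psi>)
  then show ?case by (simp add: derivable_from_andI)
next
  case (orL n \<phi> \<Gamma> \<Delta> \<psi>)
  let ?H = "insert (Or \<phi> \<psi>) (set_mset \<Gamma>)"
  have "?H \<turnstile> Or \<phi> \<psi>" by (simp add: hyp)
  moreover have "insert \<phi> ?H \<turnstile> big_or \<Delta>" "insert \<psi> ?H \<turnstile> big_or \<Delta>"
    by (rule derivable_from_mono[OF orL.IH(1)], auto) (rule derivable_from_mono[OF orL.IH(2)], auto)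
  ultimately have "?H \<turnstile> big_or \<Delta>" by (rule derivable_from_orE)
  then show ?case by simp
next
  case (orR1 n \<Gamma> \<phi> \<psi>)
  then show ?case by (simp add: derivable_from_axiom[OF A6])
next
  case (orR2 n \<Gamma> \<psi> \<phi>)
  then show ?case by (simp add: derivable_from_axiom[OF A7])
next
  case (impR n \<phi> \<Gamma> \<psi>)
  then show ?case by (simp add: derivable_from_deduction)
next
  case (impL n \<phi> \<psi> \<Gamma> \<Delta>)
  let ?H = "insert (Imp \<phi> \<psi>) (set_mset \<Gamma>)"
  have "?H \<turnstile> \<phi>" using impL.IH(1) by simp
  then have "?H \<turnstile> \<psi>" by (rule mp[rotated]) (simp add: hyp)
  then have "?H \<turnstile> big_or \<Delta>" by (intro derivable_from_trans[OF impL.IH(2)]) (auto intro: hyp)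
  then show ?case by simp
next
  case (box bs n \<phi> \<psi> \<Gamma>)
  then have "(\<lambda>(\<rho>, \<sigma>). CBox \<rho> \<sigma>) ` set bs \<turnstile> CBox \<phi> \<psi>"
    by (intro derivable_from_box_rule) (auto intro: ConstCKCEM_IffI)
  then have "set_mset (\<Gamma> + mset (map (\<lambda>(\<rho>, \<sigma>). CBox \<rho> \<sigma>) bs)) \<turnstile> CBox \<phi> \<psi>"
    by (rule derivable_from_mono) auto
  then show ?case by simp
next
  case (dia_cem bs n \<phi> ds \<eta> \<psi> \<theta> \<Gamma>)
  then have "insert (CDia \<phi> \<psi>) ((\<lambda>(\<rho>, \<sigma>). CBox \<rho> \<sigma>) ` set bs \<union> (\<lambda>(\<rho>, \<sigma>). CDia \<rho> \<sigma>) ` set ds)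
      \<turnstile> CDia \<phi> \<theta>"
    by (intro derivable_from_dia_rule) (auto intro: ConstCKCEM_IffI)
  then have "set_mset (add_mset (CDia \<phi> \<psi>) (\<Gamma> + mset (map (\<lambda>(\<rho>, \<sigma>). CBox \<rho> \<sigma>) bs)
      + mset (map (\<lambda>(\<xi>, \<chi>). CDia \<xi> \<chi>) ds))) \<turnstile> CDia \<phi> \<theta>"
    by (rule derivable_from_mono) auto
  moreover have "ConstCKCEM (Iff \<phi> \<eta>)" using dia_cem by (intro ConstCKCEM_IffI) simp_all
  ultimately show ?case using derivable_from_iffD1[OF RA_Dia] by simp
next
  case (boxdia_cem bs n \<phi> ds \<psi> \<Gamma> \<Delta>)
  then have "insert (CDia \<phi> \<psi>) ((\<lambda>(\<rho>, \<sigma>). CBox \<rho> \<sigma>) ` set bs \<union> (\<lambda>(\<rho>, \<sigma>). CDia \<rho> \<sigma>) ` set ds)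
      \<turnstile> CDia \<phi> Bot"
    by (intro derivable_from_dia_rule) (auto intro: ConstCKCEM_IffI)
  then have "set_mset (add_mset (CDia \<phi> \<psi>) (\<Gamma> + mset (map (\<lambda>(\<rho>, \<sigma>). CBox \<rho> \<sigma>) bs)
      + mset (map (\<lambda>(\<xi>, \<chi>). CDia \<xi> \<chi>) ds))) \<turnstile> CDia \<phi> Bot"
    by (rule derivable_from_mono) auto
  then have "set_mset (add_mset (CDia \<phi> \<psi>) (\<Gamma> + mset (map (\<lambda>(\<rho>, \<sigma>). CBox \<rho> \<sigma>) bs)
      + mset (map (\<lambda>(\<xi>, \<chi>). CDia \<xi> \<chi>) ds))) \<turnstile> Bot"
    by (rule derivable_from_axiom[OF CN_Dia[unfolded Neg_def]])
  then show ?case by (rule derivable_from_axiom[OF A9])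
qed

section \<open>Completeness\<close>

lemma SDerivable_andL_mem:
  "And A B \<in># X \<Longrightarrow> SDerivable (add_mset A (add_mset B X)) D \<Longrightarrow> SDerivable X D"
  by (drule SDerivable_andL) (erule SDerivable_set_mono, auto)

lemma SDerivable_orL_mem:
  "Or A B \<in># X \<Longrightarrow> SDerivable (add_mset A X) D \<Longrightarrow> SDerivable (add_mset B X) D \<Longrightarrow> SDerivable X D"
  by (drule (1) SDerivable_orL) (erule SDerivable_set_mono, auto)

lemma SDerivable_mp_mem:
  assumes "Imp A B \<in># X" "A \<in># X" "SDerivable (add_mset B X) D"
  shows "SDerivable X D"
proof -
  have "SDerivable (add_mset (Imp A B) X) D"
    using assms(3) by (rule SDerivable_impL[rotated]) (simp add: SDerivable_id_mem assms(2))
  then show ?thesis by (rule SDerivable_set_mono) (use assms(1) in auto)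
qed

lemma SDerivable_IffI:
  "SDerivable {#\<phi>#} (Some \<rho>) \<Longrightarrow> SDerivable {#\<rho>#} (Some \<phi>) \<Longrightarrow> SDerivable {#} (Some (Iff \<phi> \<rho>))"
  unfolding Iff_def by (intro SDerivable_andR SDerivable_impR) simp_all

lemma SDerivable_IffD:
  assumes "SDerivable {#} (Some (Iff \<phi> \<rho>))"
  shows "interderivable \<phi> \<rho>"
proof -
  have "SDerivable {#Iff \<phi> \<rho>, \<phi>#} (Some \<rho>)"
    unfolding Iff_def
    by (rule SDerivable_andL_mem[of "Imp \<phi> \<rho>" "Imp \<rho> \<phi>"], simp, rule SDerivable_mp_mem[of \<phi> \<rho>])
      (simp_all add: SDerivable_id_mem)
  moreover have "SDerivable {#Iff \<phi> \<rho>, \<rho>#} (Some \<phi>)"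
    unfolding Iff_def
    by (rule SDerivable_andL_mem[of "Imp \<phi> \<rho>" "Imp \<rho> \<phi>"], simp, rule SDerivable_mp_mem[of \<rho> \<phi>])
      (simp_all add: SDerivable_id_mem)
  ultimately show ?thesis
    unfolding interderivable_def using SDerivable_cut[OF assms] by fastforce
qed

lemma SDerivable_box_congr:
  "interderivable \<phi> \<rho> \<Longrightarrow> SDerivable {#\<psi>#} (Some \<chi>) \<Longrightarrow> SDerivable {#CBox \<phi> \<psi>#} (Some (CBox \<rho> \<chi>))"
  using SDerivable_box[of "[(\<phi>, \<psi>)]"] by (simp add: interderivable_def)

lemma SDerivable_dia_congr:
  "interderivable \<phi> \<rho> \<Longrightarrow> SDerivable {#\<psi>#} (Some \<chi>) \<Longrightarrow> SDerivable {#CDia \<phi> \<psi>#} (Some (CDia \<rho> \<chi>))"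
  using SDerivable_dia[of \<phi> \<psi> "[]" "[]"] by (simp add: interderivable_def SDerivable_id_mem)

lemma SDerivable_mp:
  assumes "SDerivable {#} (Some (Imp \<phi> \<psi>))" "SDerivable {#} (Some \<phi>)"
  shows "SDerivable {#} (Some \<psi>)"
proof -
  have "SDerivable {#Imp \<phi> \<psi>, \<phi>#} (Some \<psi>)"
    by (rule SDerivable_mp_mem[of \<phi> \<psi>]) (simp_all add: SDerivable_id_mem)
  from SDerivable_cut[OF assms(1) this] have "SDerivable {#\<phi>#} (Some \<psi>)" by simp
  from SDerivable_cut[OF assms(2) this[unfolded add_mset_add_single[of \<phi> "{#}", simplified]]]
  show ?thesis by simp
qed

lemma SDerivable_intuitionistic_axioms:
  shows "SDerivable {#} (Some (Imp \<phi> (Imp \<psi> \<phi>)))"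
    and "SDerivable {#} (Some (Imp (Imp \<phi> (Imp \<psi> \<chi>)) (Imp (Imp \<phi> \<psi>) (Imp \<phi> \<chi>))))"
    and "SDerivable {#} (Some (Imp (And \<phi> \<psi>) \<phi>))"
    and "SDerivable {#} (Some (Imp (And \<phi> \<psi>) \<psi>))"
    and "SDerivable {#} (Some (Imp \<phi> (Imp \<psi> (And \<phi> \<psi>))))"
    and "SDerivable {#} (Some (Imp \<phi> (Or \<phi> \<psi>)))"
    and "SDerivable {#} (Some (Imp \<psi> (Or \<phi> \<psi>)))"
    and "SDerivable {#} (Some (Imp (Imp \<phi> \<chi>) (Imp (Imp \<psi> \<chi>) (Imp (Or \<phi> \<psi>) \<chi>))))"
    and "SDerivable {#} (Some (Imp Bot \<phi>))"
proof -
  show "SDerivable {#} (Some (Imp \<phi> (Imp \<psi> \<phi>)))"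
    by (intro SDerivable_impR) (simp add: SDerivable_id_mem)
  have "SDerivable {#\<phi>, Imp \<phi> \<psi>, Imp \<phi> (Imp \<psi> \<chi>)#} (Some \<chi>)"
    by (rule SDerivable_mp_mem[of \<phi> \<psi>], simp, simp, rule SDerivable_mp_mem[of \<phi> "Imp \<psi> \<chi>"], simp, simp,
        rule SDerivable_mp_mem[of \<psi> \<chi>], simp, simp, simp add: SDerivable_id_mem)
  then show "SDerivable {#} (Some (Imp (Imp \<phi> (Imp \<psi> \<chi>)) (Imp (Imp \<phi> \<psi>) (Imp \<phi> \<chi>))))"
    by (intro SDerivable_impR) simp
  show "SDerivable {#} (Some (Imp (And \<phi> \<psi>) \<phi>))" "SDerivable {#} (Some (Imp (And \<phi> \<psi>) \<psi>))"
    by (intro SDerivable_impR, rule SDerivable_andL_mem[of \<phi> \<psi>], simp_all add: SDerivable_id_mem)+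
  show "SDerivable {#} (Some (Imp \<phi> (Imp \<psi> (And \<phi> \<psi>))))"
    by (intro SDerivable_impR SDerivable_andR) (simp_all add: SDerivable_id_mem)
  show "SDerivable {#} (Some (Imp \<phi> (Or \<phi> \<psi>)))" "SDerivable {#} (Some (Imp \<psi> (Or \<phi> \<psi>)))"
    by (intro SDerivable_impR SDerivable_orR1 SDerivable_orR2, simp add: SDerivable_id_mem)+
  have "SDerivable {#Or \<phi> \<psi>, Imp \<psi> \<chi>, Imp \<phi> \<chi>#} (Some \<chi>)"
    by (rule SDerivable_orL_mem[of \<phi> \<psi>], simp, rule SDerivable_mp_mem[of \<phi> \<chi>], simp, simp,
        simp add: SDerivable_id_mem, rule SDerivable_mp_mem[of \<psi> \<chi>], simp, simp, simp add: SDerivable_id_mem)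
  then show "SDerivable {#} (Some (Imp (Imp \<phi> \<chi>) (Imp (Imp \<psi> \<chi>) (Imp (Or \<phi> \<psi>) \<chi>))))"
    by (intro SDerivable_impR) simp
  show "SDerivable {#} (Some (Imp Bot \<phi>))"
    by (intro SDerivable_impR) (simp add: SDerivable_botL)
qed

lemma SDerivable_conditional_axioms:
  shows "SDerivable {#} (Some (Imp (CBox \<phi> (And \<psi> \<chi>)) (And (CBox \<phi> \<psi>) (CBox \<phi> \<chi>))))"
    and "SDerivable {#} (Some (Imp (And (CBox \<phi> \<psi>) (CBox \<phi> \<chi>)) (CBox \<phi> (And \<psi> \<chi>))))"
    and "SDerivable {#} (Some (CBox \<phi> Top))"
    and "SDerivable {#} (Some (Neg (CDia \<phi> Bot)))"
    and "SDerivable {#} (Some (Imp (CBox \<phi> (Imp \<psi> \<chi>)) (Imp (CDia \<phi> \<psi>) (CDia \<phi> \<chi>))))"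
    and "SDerivable {#} (Some (Imp (And (CDia \<phi> \<psi>) (CDia \<phi> \<chi>)) (CDia \<phi> (And \<psi> \<chi>))))"
proof -
  have "interderivable \<phi> \<phi>" "SDerivable {#And \<psi> \<chi>#} (Some \<psi>)" "SDerivable {#And \<psi> \<chi>#} (Some \<chi>)"
    by (simp_all add: interderivable_def SDerivable_id_mem SDerivable_andL_mem[of \<psi> \<chi>])
  then show "SDerivable {#} (Some (Imp (CBox \<phi> (And \<psi> \<chi>)) (And (CBox \<phi> \<psi>) (CBox \<phi> \<chi>))))"
    by (intro SDerivable_impR SDerivable_andR) (simp_all add: SDerivable_box_congr)
  have "SDerivable {#CBox \<phi> \<psi>, CBox \<phi> \<chi>#} (Some (CBox \<phi> (And \<psi> \<chi>)))"
    using SDerivable_box[of "[(\<phi>, \<psi>), (\<phi>, \<chi>)]"]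
    by (simp add: interderivable_def SDerivable_id_mem SDerivable_andR)
  then show "SDerivable {#} (Some (Imp (And (CBox \<phi> \<psi>) (CBox \<phi> \<chi>)) (CBox \<phi> (And \<psi> \<chi>))))"
    using SDerivable_andL[of "CBox \<phi> \<psi>" "CBox \<phi> \<chi>" "{#}"] by (simp add: SDerivable_impR)
  have "SDerivable {#} (Some Top)"
    unfolding Top_def Neg_def by (intro SDerivable_impR) (simp add: SDerivable_botL)
  then show "SDerivable {#} (Some (CBox \<phi> Top))" using SDerivable_box[of "[]"] by simp
  show "SDerivable {#} (Some (Neg (CDia \<phi> Bot)))"
    using SDerivable_boxdia[of \<phi> Bot "[]" "[]" "{#CDia \<phi> Bot#}"]
    unfolding Neg_def by (intro SDerivable_impR) (simp add: SDerivable_botL)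
  have "SDerivable {#\<psi>, Imp \<psi> \<chi>#} (Some \<chi>)"
    by (rule SDerivable_mp_mem[of \<psi> \<chi>]) (simp_all add: SDerivable_id_mem)
  then have "SDerivable {#CDia \<phi> \<psi>, CBox \<phi> (Imp \<psi> \<chi>)#} (Some (CDia \<phi> \<chi>))"
    using SDerivable_dia[of \<phi> \<psi> "[(\<phi>, Imp \<psi> \<chi>)]" "[]"] by (simp add: interderivable_def SDerivable_id_mem)
  then show "SDerivable {#} (Some (Imp (CBox \<phi> (Imp \<psi> \<chi>)) (Imp (CDia \<phi> \<psi>) (CDia \<phi> \<chi>))))"
    by (intro SDerivable_impR) simp
  have "SDerivable {#CDia \<phi> \<psi>, CDia \<phi> \<chi>#} (Some (CDia \<phi> (And \<psi> \<chi>)))"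
    using SDerivable_dia[of \<phi> \<psi> "[]" "[(\<phi>, \<chi>)]"]
    by (simp add: interderivable_def SDerivable_id_mem SDerivable_andR)
  then show "SDerivable {#} (Some (Imp (And (CDia \<phi> \<psi>) (CDia \<phi> \<chi>)) (CDia \<phi> (And \<psi> \<chi>))))"
    using SDerivable_andL[of "CDia \<phi> \<psi>" "CDia \<phi> \<chi>" "{#}"] by (simp add: SDerivable_impR)
qed

lemma SDerivable_ConstCKCEM: "ConstCKCEM \<phi> \<Longrightarrow> SDerivable {#} (Some \<phi>)"
proof (induction rule: ConstCKCEM.induct)
  case (MP \<phi> \<psi>)
  show ?case using MP.IH by (rule SDerivable_mp)
next
  case (RA_Box \<phi> \<rho> \<psi>)
  have "interderivable \<phi> \<rho>" using RA_Box.IH by (rule SDerivable_IffD)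
  then show ?case
    by (intro SDerivable_IffI SDerivable_box_congr) (auto simp: interderivable_def SDerivable_id_mem)
next
  case (RC_Box \<psi> \<chi> \<phi>)
  have "interderivable \<psi> \<chi>" using RC_Box.IH by (rule SDerivable_IffD)
  then show ?case
    by (intro SDerivable_IffI SDerivable_box_congr) (auto simp: interderivable_def SDerivable_id_mem)
next
  case (RA_Dia \<phi> \<rho> \<psi>)
  have "interderivable \<phi> \<rho>" using RA_Dia.IH by (rule SDerivable_IffD)
  then show ?case
    by (intro SDerivable_IffI SDerivable_dia_congr) (auto simp: interderivable_def SDerivable_id_mem)
next
  case (RC_Dia \<psi> \<chi> \<phi>)
  have "interderivable \<psi> \<chi>" using RC_Dia.IH by (rule SDerivable_IffD)
  then show ?case
    by (intro SDerivable_IffI SDerivable_dia_congr) (auto simp: interderivable_def SDerivable_id_mem)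
qed (rule SDerivable_intuitionistic_axioms SDerivable_conditional_axioms)+

lemma SDerivable_big_and: "\<Gamma>s \<noteq> [] \<Longrightarrow> SDerivable (mset \<Gamma>s) (Some (big_and \<Gamma>s))"
proof (induction \<Gamma>s rule: big_and.induct)
  case (3 \<phi> \<psi> \<phi>s)
  have "SDerivable (mset (\<phi> # \<psi> # \<phi>s)) (Some (big_and (\<psi> # \<phi>s)))"
    by (rule SDerivable_weaken[of "mset (\<psi> # \<phi>s)"]) (use 3 in simp_all)
  then show ?case by (simp add: SDerivable_andR SDerivable_id_mem)
qed (simp_all add: SDerivable_id_mem)

lemma derivable_from_big_and: "\<Gamma>s \<noteq> [] \<Longrightarrow> \<phi> \<in> set \<Gamma>s \<Longrightarrow> {big_and \<Gamma>s} \<turnstile> \<phi>"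
proof (induction \<Gamma>s rule: big_and.induct)
  case (3 \<chi> \<psi> \<phi>s)
  have "{big_and (\<chi> # \<psi> # \<phi>s)} \<turnstile> And \<chi> (big_and (\<psi> # \<phi>s))" by (simp add: hyp)
  then have "{big_and (\<chi> # \<psi> # \<phi>s)} \<turnstile> \<chi>" "{big_and (\<chi> # \<psi> # \<phi>s)} \<turnstile> big_and (\<psi> # \<phi>s)"
    by (rule derivable_from_andD1, rule derivable_from_andD2)
  show ?case
  proof (cases "\<phi> = \<chi>")
    case False
    with 3 have "{big_and (\<psi> # \<phi>s)} \<turnstile> \<phi>" by simp
    then show ?thesis by (rule derivable_from_trans) (use \<open>{big_and (\<chi> # \<psi> # \<phi>s)} \<turnstile> big_and (\<psi> # \<phi>s)\<close> in simp)
  qed (use \<open>{big_and (\<chi> # \<psi> # \<phi>s)} \<turnstile> \<chi>\<close> in simp)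
qed (simp_all add: hyp)

lemma ConstCKCEM_iota: "SDerivable (mset \<Gamma>s) \<Delta> \<Longrightarrow> ConstCKCEM (iota \<Gamma>s \<Delta>)"
proof -
  assume "SDerivable (mset \<Gamma>s) \<Delta>"
  then have sound: "set \<Gamma>s \<turnstile> big_or \<Delta>" unfolding SDerivable_def using SD_sound by fastforce
  show ?thesis
  proof (cases "\<Gamma>s = []")
    case True
    then show ?thesis using sound by (simp add: iota_def derivable_from_empty)
  next
    case False
    have "{big_and \<Gamma>s} \<turnstile> big_or \<Delta>"
      using sound by (rule derivable_from_trans) (rule derivable_from_big_and[OF False])
    then show ?thesis using False by (simp add: iota_def derivable_from_empty derivable_from_deduction)
  qed
qed

lemma SDerivable_iota: "ConstCKCEM (iota \<Gamma>s \<Delta>) \<Longrightarrow> SDerivable (mset \<Gamma>s) \<Delta>"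
proof -
  assume "ConstCKCEM (iota \<Gamma>s \<Delta>)"
  then have iota: "SDerivable {#} (Some (iota \<Gamma>s \<Delta>))" by (rule SDerivable_ConstCKCEM)
  have conclusion: "SDerivable (add_mset (big_or \<Delta>) X) \<Delta>" for X
    by (cases \<Delta>) (simp_all add: SDerivable_botL SDerivable_id)
  show ?thesis
  proof (cases "\<Gamma>s = []")
    case True
    then have "SDerivable ({#} + {#}) \<Delta>"
      using iota by (intro SDerivable_cut[OF _ conclusion[of "{#}"]]) (simp add: iota_def)
    then show ?thesis using True by simp
  next
    case False
    have "SDerivable (add_mset (Imp (big_and \<Gamma>s) (big_or \<Delta>)) (mset \<Gamma>s)) (Some (big_and \<Gamma>s))"
      using SDerivable_big_and[OF False] by (rule SDerivable_weaken) simp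
    then have "SDerivable (add_mset (Imp (big_and \<Gamma>s) (big_or \<Delta>)) (mset \<Gamma>s)) \<Delta>"
      using conclusion by (rule SDerivable_impL)
    then have "SDerivable ({#} + mset \<Gamma>s) \<Delta>"
      using iota False by (intro SDerivable_cut[of "{#}" "Imp (big_and \<Gamma>s) (big_or \<Delta>)"]) (simp_all add: iota_def)
    then show ?thesis by simp
  qed
qed

theorem theorem13:
  shows "(\<forall>n \<Gamma> \<Delta> \<phi>. SD n \<Gamma> \<Delta> \<longrightarrow> SD n (add_mset \<phi> \<Gamma>) \<Delta>)
       \<and> (\<forall>n \<Gamma> \<phi>. SD n \<Gamma> None \<longrightarrow> SD n \<Gamma> (Some \<phi>))
       \<and> (\<forall>n \<Gamma> \<Delta> \<phi>. SD n (add_mset \<phi> (add_mset \<phi> \<Gamma>)) \<Delta> \<longrightarrow> SD n (add_mset \<phi> \<Gamma>) \<Delta>)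
       \<and> (\<forall>\<Gamma> \<Gamma>' \<Delta> \<phi>. SDerivable \<Gamma> (Some \<phi>) \<longrightarrow> SDerivable (add_mset \<phi> \<Gamma>') \<Delta>
              \<longrightarrow> SDerivable (\<Gamma> + \<Gamma>') \<Delta>)
       \<and> (\<forall>(\<Gamma>s :: 'a fm list) \<Delta>. SDerivable (mset \<Gamma>s) \<Delta> \<longleftrightarrow> ConstCKCEM (iota \<Gamma>s \<Delta>))"
proof (intro conjI allI impI)
  fix n \<Gamma> \<Delta> \<phi>
  assume "SD n \<Gamma> \<Delta>"
  then show "SD n (add_mset \<phi> \<Gamma>) \<Delta>" by (rule SD_weaken) simp
next
  fix n \<Gamma> \<phi>
  assume "SD n \<Gamma> None"
  then show "SD n \<Gamma> (Some \<phi>)" by (rule SD_wR)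
next
  fix n \<Gamma> \<Delta> \<phi>
  assume "SD n (add_mset \<phi> (add_mset \<phi> \<Gamma>)) \<Delta>"
  then show "SD n (add_mset \<phi> \<Gamma>) \<Delta>" by (rule SD_contract)
next
  fix \<Gamma> \<Gamma>' \<Delta> \<phi>
  assume "SDerivable \<Gamma> (Some \<phi>)" "SDerivable (add_mset \<phi> \<Gamma>') \<Delta>"
  then show "SDerivable (\<Gamma> + \<Gamma>') \<Delta>" by (rule SDerivable_cut)
next
  fix \<Gamma>s :: "'a fm list" and \<Delta>
  show "SDerivable (mset \<Gamma>s) \<Delta> \<longleftrightarrow> ConstCKCEM (iota \<Gamma>s \<Delta>)"
    using ConstCKCEM_iota SDerivable_iota by blast
qed

end
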